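(* Let $\mathbb{C}$ be a regular Mal'tsev category. Then $\mathbb{C}$ is congruence distributive if and only if $\mathbb{C}$ is a majority category.
   Context: A category is regular if it has finite limits and coequalizers of kernel pairs and regular epimorphisms are pullback-stable. A finitely complete category is Mal'tsev if every reflexive relation (subobject of $X\times X$ containing the diagonal) is an equivalence relation. In a regular Mal'tsev category, for equivalence relations $\alpha,\beta$ on $X$ the join in the poset of equivalence relations on $X$ exists and equals the relational composite $\alpha\circ\beta$, where the composite of relations represented by $(r_1,r_2):R_0\to X\times X$ and $(s_1,s_2):S_0\to X\times X$ is the image (regular epi–mono factorization) of $(r_1p_1,s_2p_2):P\to X\times X$, $(P,p_1,p_2)$ the pullback of $s_1$ along $r_2$. $\mathbb{C}$ is congruence distributive if for every object $X$ the lattice of equivalence relations on $X$ is distributive. For $w:S\to W$ and subobject $A$ of $W$, $w\in_S A$ means $w$ factors through a representative of $A$. A ternary relation $R\leqslant X\times Y\times Z$ is majority-selecting if for all $S$ and $x,x':S\to X$, $y,y':S\to Y$, $z,z':S\to Z$: $(x,y,z')\in_S R$, $(x,y',z)\in_S R$, $(x',y,z)\in_S R$ imply $(x,y,z)\in_S R$; a majority category is one in which every ternary relation is majority-selecting. *)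

theory Defs
  imports Main
begin

record ('o, 'm) category =
  Obj :: "'o set"
  Arr :: "'m set"
  Dom :: "'m \<Rightarrow> 'o"
  Cod :: "'m \<Rightarrow> 'o"
  Idm :: "'o \<Rightarrow> 'm"
  Comp :: "'m \<Rightarrow> 'm \<Rightarrow> 'm"   (* Comp C g f = g o f *)

definition hom :: "('o,'m) category \<Rightarrow> 'm \<Rightarrow> 'o \<Rightarrow> 'o \<Rightarrow> bool" where
  "hom C f X Y \<longleftrightarrow> f \<in> Arr C \<and> Dom C f = X \<and> Cod C f = Y"

definition is_category :: "('o,'m) category \<Rightarrow> bool" where
  "is_category C \<longleftrightarrow>
     (\<forall>f\<in>Arr C. Dom C f \<in> Obj C \<and> Cod C f \<in> Obj C) \<and>
     (\<forall>X\<in>Obj C. hom C (Idm C X) X X) \<and>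
     (\<forall>f g. f \<in> Arr C \<and> g \<in> Arr C \<and> Cod C f = Dom C g \<longrightarrow>
            hom C (Comp C g f) (Dom C f) (Cod C g)) \<and>
     (\<forall>f\<in>Arr C. Comp C f (Idm C (Dom C f)) = f \<and> Comp C (Idm C (Cod C f)) f = f) \<and>
     (\<forall>f g h. f \<in> Arr C \<and> g \<in> Arr C \<and> h \<in> Arr C \<and> Cod C f = Dom C g \<and> Cod C g = Dom C h
            \<longrightarrow> Comp C h (Comp C g f) = Comp C (Comp C h g) f)"

definition is_terminal :: "('o,'m) category \<Rightarrow> 'o \<Rightarrow> bool" where
  "is_terminal C T \<longleftrightarrow> T \<in> Obj C \<and> (\<forall>X\<in>Obj C. \<exists>!f. hom C f X T)"

definition is_pullback :: "('o,'m) category \<Rightarrow> 'm \<Rightarrow> 'm \<Rightarrow> 'm \<Rightarrow> 'm \<Rightarrow> bool" where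
  "is_pullback C f g p q \<longleftrightarrow>
     f \<in> Arr C \<and> g \<in> Arr C \<and> Cod C f = Cod C g \<and>
     hom C p (Dom C q) (Dom C f) \<and> hom C q (Dom C p) (Dom C g) \<and>
     Comp C f p = Comp C g q \<and>
     (\<forall>W u v. hom C u W (Dom C f) \<and> hom C v W (Dom C g) \<and> Comp C f u = Comp C g v \<longrightarrow>
        (\<exists>!h. hom C h W (Dom C p) \<and> Comp C p h = u \<and> Comp C q h = v))"

definition has_finite_limits :: "('o,'m) category \<Rightarrow> bool" where
  "has_finite_limits C \<longleftrightarrow>
     (\<exists>T. is_terminal C T) \<and>
     (\<forall>f g. f \<in> Arr C \<and> g \<in> Arr C \<and> Cod C f = Cod C g \<longrightarrow> (\<exists>p q. is_pullback C f g p q))"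

definition is_coequalizer :: "('o,'m) category \<Rightarrow> 'm \<Rightarrow> 'm \<Rightarrow> 'm \<Rightarrow> bool" where
  "is_coequalizer C f g e \<longleftrightarrow>
     f \<in> Arr C \<and> g \<in> Arr C \<and> Dom C f = Dom C g \<and> Cod C f = Cod C g \<and>
     e \<in> Arr C \<and> Dom C e = Cod C f \<and> Comp C e f = Comp C e g \<and>
     (\<forall>Y h. hom C h (Cod C f) Y \<and> Comp C h f = Comp C h g \<longrightarrow>
        (\<exists>!k. hom C k (Cod C e) Y \<and> Comp C k e = h))"

definition regular_epi :: "('o,'m) category \<Rightarrow> 'm \<Rightarrow> bool" where
  "regular_epi C e \<longleftrightarrow> (\<exists>f g. is_coequalizer C f g e)"

definition is_regular :: "('o,'m) category \<Rightarrow> bool" where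
  "is_regular C \<longleftrightarrow>
     has_finite_limits C \<and>
     (\<forall>f p q. is_pullback C f f p q \<longrightarrow> (\<exists>e. is_coequalizer C p q e)) \<and>
     (\<forall>f g p q. is_pullback C f g p q \<and> regular_epi C f \<longrightarrow> regular_epi C q)"

section \<open>Relations (subobjects of products, presented as jointly monic spans)\<close>

definition rel2 :: "('o,'m) category \<Rightarrow> 'm \<times> 'm \<Rightarrow> 'o \<Rightarrow> 'o \<Rightarrow> bool" where
  "rel2 C R X Y \<longleftrightarrow> (case R of (r1, r2) \<Rightarrow>
     hom C r1 (Dom C r1) X \<and> hom C r2 (Dom C r1) Y \<and>
     (\<forall>W u v. hom C u W (Dom C r1) \<and> hom C v W (Dom C r1) \<and>
        Comp C r1 u = Comp C r1 v \<and> Comp C r2 u = Comp C r2 v \<longrightarrow> u = v))"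

definition rel3 :: "('o,'m) category \<Rightarrow> 'm \<times> 'm \<times> 'm \<Rightarrow> 'o \<Rightarrow> 'o \<Rightarrow> 'o \<Rightarrow> bool" where
  "rel3 C R X Y Z \<longleftrightarrow> (case R of (r1, r2, r3) \<Rightarrow>
     hom C r1 (Dom C r1) X \<and> hom C r2 (Dom C r1) Y \<and> hom C r3 (Dom C r1) Z \<and>
     (\<forall>W u v. hom C u W (Dom C r1) \<and> hom C v W (Dom C r1) \<and>
        Comp C r1 u = Comp C r1 v \<and> Comp C r2 u = Comp C r2 v \<and> Comp C r3 u = Comp C r3 v
        \<longrightarrow> u = v))"

definition rel_le :: "('o,'m) category \<Rightarrow> 'm \<times> 'm \<Rightarrow> 'm \<times> 'm \<Rightarrow> bool" where
  "rel_le C R S \<longleftrightarrow> (case R of (r1, r2) \<Rightarrow> case S of (s1, s2) \<Rightarrow>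
     (\<exists>u. hom C u (Dom C r1) (Dom C s1) \<and> Comp C s1 u = r1 \<and> Comp C s2 u = r2))"

definition mem3 :: "('o,'m) category \<Rightarrow> 'o \<Rightarrow> 'm \<times> 'm \<times> 'm \<Rightarrow> 'm \<times> 'm \<times> 'm \<Rightarrow> bool" where
  "mem3 C S w R \<longleftrightarrow> (case w of (x, y, z) \<Rightarrow> case R of (r1, r2, r3) \<Rightarrow>
     (\<exists>u. hom C u S (Dom C r1) \<and> Comp C r1 u = x \<and> Comp C r2 u = y \<and> Comp C r3 u = z))"

definition reflexive_rel :: "('o,'m) category \<Rightarrow> 'o \<Rightarrow> 'm \<times> 'm \<Rightarrow> bool" where
  "reflexive_rel C X R \<longleftrightarrow> (case R of (r1, r2) \<Rightarrow>
     (\<exists>d. hom C d X (Dom C r1) \<and> Comp C r1 d = Idm C X \<and> Comp C r2 d = Idm C X))"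

definition symmetric_rel :: "('o,'m) category \<Rightarrow> 'm \<times> 'm \<Rightarrow> bool" where
  "symmetric_rel C R \<longleftrightarrow> rel_le C (snd R, fst R) R"

text \<open>Transitive: the relational composite R o R is contained in R, i.e.
  (r1 p1, r2 p2) factors through R, where (P,p1,p2) is the pullback of r1 along r2.\<close>
definition transitive_rel :: "('o,'m) category \<Rightarrow> 'm \<times> 'm \<Rightarrow> bool" where
  "transitive_rel C R \<longleftrightarrow> (case R of (r1, r2) \<Rightarrow>
     (\<forall>p1 p2. is_pullback C r2 r1 p1 p2 \<longrightarrow>
        (\<exists>t. hom C t (Dom C p1) (Dom C r1) \<and>
             Comp C r1 t = Comp C r1 p1 \<and> Comp C r2 t = Comp C r2 p2)))"

definition equiv_rel :: "('o,'m) category \<Rightarrow> 'o \<Rightarrow> 'm \<times> 'm \<Rightarrow> bool" where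
  "equiv_rel C X R \<longleftrightarrow> rel2 C R X X \<and> reflexive_rel C X R \<and> symmetric_rel C R \<and> transitive_rel C R"

definition is_maltsev :: "('o,'m) category \<Rightarrow> bool" where
  "is_maltsev C \<longleftrightarrow> has_finite_limits C \<and>
     (\<forall>X\<in>Obj C. \<forall>R. rel2 C R X X \<and> reflexive_rel C X R \<longrightarrow> equiv_rel C X R)"

definition is_eq_meet :: "('o,'m) category \<Rightarrow> 'o \<Rightarrow> 'm \<times> 'm \<Rightarrow> 'm \<times> 'm \<Rightarrow> 'm \<times> 'm \<Rightarrow> bool" where
  "is_eq_meet C X A B M \<longleftrightarrow> equiv_rel C X M \<and> rel_le C M A \<and> rel_le C M B \<and>
     (\<forall>N. equiv_rel C X N \<and> rel_le C N A \<and> rel_le C N B \<longrightarrow> rel_le C N M)"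

definition is_eq_join :: "('o,'m) category \<Rightarrow> 'o \<Rightarrow> 'm \<times> 'm \<Rightarrow> 'm \<times> 'm \<Rightarrow> 'm \<times> 'm \<Rightarrow> bool" where
  "is_eq_join C X A B J \<longleftrightarrow> equiv_rel C X J \<and> rel_le C A J \<and> rel_le C B J \<and>
     (\<forall>N. equiv_rel C X N \<and> rel_le C A N \<and> rel_le C B N \<longrightarrow> rel_le C J N)"

text \<open>The poset of equivalence relations on every object X is a distributive lattice:
  binary meets and joins exist and A \<and> (B \<or> D) \<le> (A \<and> B) \<or> (A \<and> D)
  (the reverse inequality holds in every lattice).\<close>
definition congruence_distributive :: "('o,'m) category \<Rightarrow> bool" where
  "congruence_distributive C \<longleftrightarrow>
     (\<forall>X\<in>Obj C.
       (\<forall>A B. equiv_rel C X A \<and> equiv_rel C X B \<longrightarrow>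
          (\<exists>M. is_eq_meet C X A B M) \<and> (\<exists>J. is_eq_join C X A B J)) \<and>
       (\<forall>A B D J M M1 M2 J'.
          equiv_rel C X A \<and> equiv_rel C X B \<and> equiv_rel C X D \<and>
          is_eq_join C X B D J \<and> is_eq_meet C X A J M \<and>
          is_eq_meet C X A B M1 \<and> is_eq_meet C X A D M2 \<and> is_eq_join C X M1 M2 J'
          \<longrightarrow> rel_le C M J'))"

definition majority_selecting ::
  "('o,'m) category \<Rightarrow> 'm \<times> 'm \<times> 'm \<Rightarrow> 'o \<Rightarrow> 'o \<Rightarrow> 'o \<Rightarrow> bool" where
  "majority_selecting C R X Y Z \<longleftrightarrow>
     (\<forall>S x x' y y' z z'. S \<in> Obj C \<and>
        hom C x S X \<and> hom C x' S X \<and> hom C y S Y \<and> hom C y' S Y \<and> hom C z S Z \<and> hom C z' S Z \<and>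
        mem3 C S (x, y, z') R \<and> mem3 C S (x, y', z) R \<and> mem3 C S (x', y, z) R
        \<longrightarrow> mem3 C S (x, y, z) R)"

definition is_majority :: "('o,'m) category \<Rightarrow> bool" where
  "is_majority C \<longleftrightarrow>
     (\<forall>X\<in>Obj C. \<forall>Y\<in>Obj C. \<forall>Z\<in>Obj C. \<forall>R. rel3 C R X Y Z \<longrightarrow> majority_selecting C R X Y Z)"

end

theory Submission
  imports Defs
begin

text \<open>In a regular Mal'tsev category meets of equivalence relations are intersections and joins
  are relational composites, so congruence distributivity amounts to
  \<open>A \<and> (B \<circ> D) \<le> (A \<and> B) \<circ> (A \<and> D)\<close>, read on generalized elements up to regular
  epimorphic covers. For a ternary relation \<open>R\<close> and the kernel pairs \<open>K\<^sub>1, K\<^sub>2, K\<^sub>3\<close> of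
  its projections, the three hypotheses of majority selection give elements \<open>a, b, c\<close> of \<open>R\<close>
  with \<open>a K\<^sub>1 b\<close>, \<open>a K\<^sub>2 c\<close>, \<open>c K\<^sub>3 b\<close>; distributivity yields \<open>s\<close> with
  \<open>a (K\<^sub>1 \<and> K\<^sub>2) s (K\<^sub>1 \<and> K\<^sub>3) b\<close>, which is the required element of \<open>R\<close>. Conversely,
  if \<open>x A z\<close> and \<open>x B y D z\<close>, majority applied to \<open>{(p, q, r). \<exists>w. p B w \<and> q A w \<and> w D r}\<close>
  and the triples \<open>(x, x, x)\<close>, \<open>(x, y, z)\<close>, \<open>(z, x, z)\<close> gives a \<open>w\<close> with
  \<open>x (A \<and> B) w (A \<and> D) z\<close>.\<close>

locale cat =
  fixes C :: "('o,'m) category"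
  assumes is_cat: "is_category C"
begin

abbreviation comp (infixr "\<cdot>" 75) where "g \<cdot> f \<equiv> Comp C g f"

lemma homD: "hom C f X Y \<Longrightarrow> f \<in> Arr C \<and> Dom C f = X \<and> Cod C f = Y"
  by (simp add: hom_def)

lemma hom_objs: "hom C f X Y \<Longrightarrow> X \<in> Obj C \<and> Y \<in> Obj C"
  using is_cat unfolding is_category_def hom_def by auto

lemma comp_hom: "hom C f X Y \<Longrightarrow> hom C g Y Z \<Longrightarrow> hom C (g \<cdot> f) X Z"
  using is_cat unfolding is_category_def hom_def by auto

lemma id_hom: "X \<in> Obj C \<Longrightarrow> hom C (Idm C X) X X"
  using is_cat unfolding is_category_def by auto

lemma comp_id_left [simp]: "hom C f X Y \<Longrightarrow> Idm C Y \<cdot> f = f"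
  using is_cat unfolding is_category_def hom_def by auto

lemma comp_id_right [simp]: "hom C f X Y \<Longrightarrow> f \<cdot> Idm C X = f"
  using is_cat unfolding is_category_def hom_def by auto

lemma comp_assoc: "hom C f X Y \<Longrightarrow> hom C g Y Z \<Longrightarrow> hom C h Z V \<Longrightarrow> h \<cdot> (g \<cdot> f) = (h \<cdot> g) \<cdot> f"
  using is_cat unfolding is_category_def hom_def by auto

lemma arr_comp [simp]: "f \<in> Arr C \<Longrightarrow> g \<in> Arr C \<Longrightarrow> Cod C f = Dom C g \<Longrightarrow> g \<cdot> f \<in> Arr C"
  and dom_comp [simp]: "f \<in> Arr C \<Longrightarrow> g \<in> Arr C \<Longrightarrow> Cod C f = Dom C g \<Longrightarrow> Dom C (g \<cdot> f) = Dom C f"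
  and cod_comp [simp]: "f \<in> Arr C \<Longrightarrow> g \<in> Arr C \<Longrightarrow> Cod C f = Dom C g \<Longrightarrow> Cod C (g \<cdot> f) = Cod C g"
  using is_cat unfolding is_category_def hom_def by blast+

lemma comp_assoc_arr [simp]:
  "f \<in> Arr C \<Longrightarrow> g \<in> Arr C \<Longrightarrow> h \<in> Arr C \<Longrightarrow> Cod C f = Dom C g \<Longrightarrow> Cod C g = Dom C h
   \<Longrightarrow> (h \<cdot> g) \<cdot> f = h \<cdot> (g \<cdot> f)"
proof -
  assume "f \<in> Arr C" "g \<in> Arr C" "h \<in> Arr C" "Cod C f = Dom C g" "Cod C g = Dom C h"
  then have "hom C f (Dom C f) (Dom C g)" "hom C g (Dom C g) (Dom C h)" "hom C h (Dom C h) (Cod C h)"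
    unfolding hom_def by simp_all
  then show ?thesis by (rule comp_assoc[symmetric])
qed

lemma comp_eq_precomp:
  assumes "a \<cdot> b = c \<cdot> d" "hom C z W X" "hom C b X Y" "hom C a Y Z" "hom C d X Y'" "hom C c Y' Z"
  shows "a \<cdot> (b \<cdot> z) = c \<cdot> (d \<cdot> z)"
  using assms(1) comp_assoc[OF assms(2,3,4)] comp_assoc[OF assms(2,5,6)] by simp

lemma pullbackD:
  assumes "is_pullback C f g p q"
  shows "hom C p (Dom C p) (Dom C f)" "hom C q (Dom C p) (Dom C g)" "f \<cdot> p = g \<cdot> q"
    "hom C f (Dom C f) (Cod C f)" "hom C g (Dom C g) (Cod C f)"
proof -
  have "f \<in> Arr C" "g \<in> Arr C" "Cod C f = Cod C g"
    "hom C p (Dom C q) (Dom C f)" "hom C q (Dom C p) (Dom C g)" "f \<cdot> p = g \<cdot> q"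
    using assms unfolding is_pullback_def by blast+
  then show "hom C p (Dom C p) (Dom C f)" "hom C q (Dom C p) (Dom C g)" "f \<cdot> p = g \<cdot> q"
    "hom C f (Dom C f) (Cod C f)" "hom C g (Dom C g) (Cod C f)"
    unfolding hom_def by simp_all
qed

lemma pullback_lift:
  assumes "is_pullback C f g p q" "hom C u W (Dom C f)" "hom C v W (Dom C g)" "f \<cdot> u = g \<cdot> v"
  obtains h where "hom C h W (Dom C p)" "p \<cdot> h = u" "q \<cdot> h = v"
  using assms unfolding is_pullback_def by blast

lemma pullback_uniq:
  assumes pb: "is_pullback C f g p q" and "hom C h W (Dom C p)" "hom C h' W (Dom C p)"
    and "p \<cdot> h = p \<cdot> h'" "q \<cdot> h = q \<cdot> h'"
  shows "h = h'"
proof -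
  note D = pullbackD[OF pb]
  have "f \<cdot> (p \<cdot> h) = g \<cdot> (q \<cdot> h)"
    using comp_eq_precomp[OF D(3) assms(2) D(1) D(4) D(2) D(5)] .
  moreover have "hom C (p \<cdot> h) W (Dom C f)" "hom C (q \<cdot> h) W (Dom C g)"
    using assms(2) D(1,2) comp_hom by blast+
  ultimately have "\<exists>!k. hom C k W (Dom C p) \<and> p \<cdot> k = p \<cdot> h \<and> q \<cdot> k = q \<cdot> h"
    using pb unfolding is_pullback_def by blast
  then show ?thesis using assms(2-5) by metis
qed

definition monic :: "'m \<Rightarrow> bool" where
  "monic m \<longleftrightarrow> (\<forall>W u v. hom C u W (Dom C m) \<and> hom C v W (Dom C m) \<and> m \<cdot> u = m \<cdot> v \<longrightarrow> u = v)"

lemma monicD: "monic m \<Longrightarrow> hom C u W (Dom C m) \<Longrightarrow> hom C v W (Dom C m) \<Longrightarrow> m \<cdot> u = m \<cdot> v \<Longrightarrow> u = v"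
  unfolding monic_def by blast

definition epic :: "'m \<Rightarrow> bool" where
  "epic e \<longleftrightarrow> (\<forall>Y u v. hom C u (Cod C e) Y \<and> hom C v (Cod C e) Y \<and> u \<cdot> e = v \<cdot> e \<longrightarrow> u = v)"

lemma epicD: "epic e \<Longrightarrow> hom C u (Cod C e) Y \<Longrightarrow> hom C v (Cod C e) Y \<Longrightarrow> u \<cdot> e = v \<cdot> e \<Longrightarrow> u = v"
  unfolding epic_def by blast

lemma epic_comp:
  assumes e: "epic e" "hom C e V W" and e': "epic e'" "hom C e' U V"
  shows "epic (e \<cdot> e')"
  unfolding epic_def
proof (intro allI impI, elim conjE)
  fix Y u v assume "hom C u (Cod C (e \<cdot> e')) Y" "hom C v (Cod C (e \<cdot> e')) Y" "u \<cdot> (e \<cdot> e') = v \<cdot> (e \<cdot> e')"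
  then have u: "hom C u W Y" and v: "hom C v W Y" and "(u \<cdot> e) \<cdot> e' = (v \<cdot> e) \<cdot> e'"
    using homD[OF comp_hom[OF e'(2) e(2)]] comp_assoc[OF e'(2) e(2)] by auto
  then have "u \<cdot> e = v \<cdot> e"
    using epicD[OF e'(1)] comp_hom[OF e(2)] e'(2) homD by metis
  then show "u = v" using epicD[OF e(1)] u v e(2) homD by metis
qed

end

section \<open>Regular categories\<close>

locale regular_cat = cat +
  assumes is_reg: "is_regular C"
begin

lemma pullback_exists:
  assumes "hom C f A B" "hom C g B' B"
  obtains p q where "is_pullback C f g p q"
  using assms is_reg unfolding is_regular_def has_finite_limits_def hom_def by metis

lemma coequalizerD:
  assumes "is_coequalizer C f g e"
  shows "hom C f (Dom C f) (Dom C e)" "hom C g (Dom C f) (Dom C e)" "hom C e (Dom C e) (Cod C e)"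
    "e \<cdot> f = e \<cdot> g"
    and coequalizer_universal:
      "\<And>Y h. hom C h (Dom C e) Y \<Longrightarrow> h \<cdot> f = h \<cdot> g \<Longrightarrow> \<exists>!k. hom C k (Cod C e) Y \<and> k \<cdot> e = h"
proof -
  have A: "f \<in> Arr C \<and> g \<in> Arr C \<and> Dom C f = Dom C g \<and> Cod C f = Cod C g \<and> e \<in> Arr C
    \<and> Dom C e = Cod C f \<and> e \<cdot> f = e \<cdot> g"
    using assms unfolding is_coequalizer_def by (elim conjE) (intro conjI; assumption)
  then show "hom C f (Dom C f) (Dom C e)" "hom C g (Dom C f) (Dom C e)"
    "hom C e (Dom C e) (Cod C e)" "e \<cdot> f = e \<cdot> g"
    unfolding hom_def by simp_all
  have "\<forall>Y h. hom C h (Cod C f) Y \<and> h \<cdot> f = h \<cdot> g \<longrightarrow> (\<exists>!k. hom C k (Cod C e) Y \<and> k \<cdot> e = h)"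
    using assms unfolding is_coequalizer_def by (elim conjE) assumption
  then show "\<And>Y h. hom C h (Dom C e) Y \<Longrightarrow> h \<cdot> f = h \<cdot> g \<Longrightarrow> \<exists>!k. hom C k (Cod C e) Y \<and> k \<cdot> e = h"
    using A by simp
qed

lemma coequalizer_factor:
  assumes "is_coequalizer C f g e" "hom C h (Dom C e) Y" "h \<cdot> f = h \<cdot> g"
  obtains k where "hom C k (Cod C e) Y" "k \<cdot> e = h"
  using coequalizer_universal[OF assms] by blast

lemma regular_epi_epic:
  assumes e: "regular_epi C e"
  shows "epic e"
  unfolding epic_def
proof (intro allI impI, elim conjE)
  fix Y u v assume u: "hom C u (Cod C e) Y" and v: "hom C v (Cod C e) Y" and eq: "u \<cdot> e = v \<cdot> e"
  obtain f g where co: "is_coequalizer C f g e" using e unfolding regular_epi_def by blast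
  note D = coequalizerD[OF co]
  have "(u \<cdot> e) \<cdot> f = (u \<cdot> e) \<cdot> g"
    using comp_assoc[OF D(1,3) u] comp_assoc[OF D(2,3) u] D(4) by simp
  then have "\<exists>!k. hom C k (Cod C e) Y \<and> k \<cdot> e = u \<cdot> e"
    by (rule coequalizer_universal[OF co comp_hom[OF D(3) u]])
  then show "u = v" using u v eq by (elim ex1E) metis
qed

lemma regular_epi_pullback: "regular_epi C e \<Longrightarrow> is_pullback C e g p q \<Longrightarrow> regular_epi C q"
  using is_reg unfolding is_regular_def by blast

lemma regular_epi_cover:
  assumes e: "regular_epi C e" "hom C e P I" and u: "hom C u W I"
  obtains W' e' t where "hom C e' W' W" "regular_epi C e'" "hom C t W' P" "e \<cdot> t = u \<cdot> e'"
proof -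
  obtain t e' where pb: "is_pullback C e u t e'" using pullback_exists[OF e(2) u] .
  have "Dom C e = P" "Dom C u = W" using e(2) u homD by auto
  then show ?thesis
    using that pullbackD[OF pb] regular_epi_pullback[OF e(1) pb] by simp
qed

lemma regular_epi_cover2:
  assumes e: "regular_epi C e" "hom C e P I" and u: "hom C u W I" and v: "hom C v W I"
  obtains W' c s t where "hom C c W' W" "epic c" "hom C s W' P" "hom C t W' P"
    "e \<cdot> s = u \<cdot> c" "e \<cdot> t = v \<cdot> c"
proof -
  obtain W1 e1 t1 where e1: "hom C e1 W1 W" "regular_epi C e1" "hom C t1 W1 P" and t1: "e \<cdot> t1 = u \<cdot> e1"
    by (rule regular_epi_cover[OF e u])
  obtain W2 e2 t2 where e2: "hom C e2 W2 W1" "regular_epi C e2" "hom C t2 W2 P"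
    and t2: "e \<cdot> t2 = (v \<cdot> e1) \<cdot> e2"
    by (rule regular_epi_cover[OF e comp_hom[OF e1(1) v]])
  show ?thesis
  proof (rule that)
    show "hom C (e1 \<cdot> e2) W2 W" "hom C (t1 \<cdot> e2) W2 P" using comp_hom e1 e2 by blast+
    show "epic (e1 \<cdot> e2)" using epic_comp regular_epi_epic e1(1,2) e2(1,2) by blast
    show "e \<cdot> (t1 \<cdot> e2) = u \<cdot> (e1 \<cdot> e2)" using comp_eq_precomp[OF t1 e2(1) e1(3) e(2) e1(1) u] .
    show "e \<cdot> t2 = v \<cdot> (e1 \<cdot> e2)" using t2 comp_assoc[OF e2(1) e1(1) v] by simp
  qed (rule e2(3))
qed

text \<open>Two elements identified by \<open>m\<close> lift, on a common cover, to elements of the kernel pair of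
  \<open>f = m e\<close>, which the coequalizer \<open>e\<close> identifies.\<close>
lemma kernel_pair_coequalizer_factor_monic:
  assumes kp: "is_pullback C f f k1 k2" and co: "is_coequalizer C k1 k2 e"
    and m: "hom C m (Cod C e) Q" and me: "m \<cdot> e = f"
  shows "monic m"
  unfolding monic_def
proof (intro allI impI, elim conjE)
  fix W u v assume "hom C u W (Dom C m)" "hom C v W (Dom C m)" and muv: "m \<cdot> u = m \<cdot> v"
  then have u: "hom C u W (Cod C e)" and v: "hom C v W (Cod C e)" using m homD by auto
  note K = pullbackD[OF kp] and E = coequalizerD[OF co]
  have re: "regular_epi C e" using co unfolding regular_epi_def by blast
  obtain W' c s t where c: "hom C c W' W" "epic c" and s: "hom C s W' (Dom C e)" and t: "hom C t W' (Dom C e)"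
    and es: "e \<cdot> s = u \<cdot> c" and et: "e \<cdot> t = v \<cdot> c"
    by (rule regular_epi_cover2[OF re E(3) u v])
  have "f \<cdot> s = m \<cdot> (u \<cdot> c)" using comp_assoc[OF s E(3) m] me es by simp
  also have "\<dots> = m \<cdot> (v \<cdot> c)" using comp_eq_precomp[OF muv c(1) u m v m] .
  also have "\<dots> = f \<cdot> t" using comp_assoc[OF t E(3) m] me et by simp
  finally obtain h where h: "hom C h W' (Dom C k1)" "k1 \<cdot> h = s" "k2 \<cdot> h = t"
    using pullback_lift[OF kp] s t K(1) E(1) homD by metis
  have "u \<cdot> c = v \<cdot> c"
    using es et h comp_eq_precomp[OF E(4) h(1) E(1) E(3) E(2) E(3)] by simp
  then show "u = v" using epicD[OF c(2)] u v c(1) homD by metis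
qed

lemma image_factorization:
  assumes f: "hom C f P Q"
  obtains I e m where "hom C e P I" "hom C m I Q" "m \<cdot> e = f" "regular_epi C e" "monic m"
proof -
  obtain k1 k2 where kp: "is_pullback C f f k1 k2" using pullback_exists[OF f f] .
  then obtain e where co: "is_coequalizer C k1 k2 e" using is_reg unfolding is_regular_def by blast
  note K = pullbackD[OF kp] and E = coequalizerD[OF co]
  have dom_e: "Dom C e = P" using K(1) E(1) f homD by metis
  obtain m where m: "hom C m (Cod C e) Q" "m \<cdot> e = f"
    using coequalizer_factor[OF co _ K(3)] f dom_e by metis
  have "regular_epi C e" using co unfolding regular_epi_def by blast
  then show ?thesis
    using that E(3) dom_e m kernel_pair_coequalizer_factor_monic[OF kp co m] by simp
qed


lemma regular_epi_descend:
  assumes e: "regular_epi C e" "hom C e W' W" and t: "hom C t W' R0"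
    and fibres: "\<And>V u v. hom C u V W' \<Longrightarrow> hom C v V W' \<Longrightarrow> e \<cdot> u = e \<cdot> v \<Longrightarrow> t \<cdot> u = t \<cdot> v"
  obtains k where "hom C k W R0" "k \<cdot> e = t"
proof -
  obtain f g where co: "is_coequalizer C f g e" using e(1) unfolding regular_epi_def by blast
  note E = coequalizerD[OF co]
  have dom: "Dom C e = W'" "Cod C e = W" using e(2) homD by auto
  have "t \<cdot> f = t \<cdot> g" using fibres[OF E(1,2)[unfolded dom(1)] E(4)] .
  then show ?thesis using coequalizer_factor[OF co t[folded dom(1)]] that unfolding dom(2) by blast
qed

lemma regular_epi_cancel_leg:
  assumes e: "regular_epi C e" "hom C e W' W" and k: "hom C k W R0" and r: "hom C r R0 X"
    and x: "hom C x W X" and "k \<cdot> e = t" "r \<cdot> t = x \<cdot> e"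
  shows "r \<cdot> k = x"
proof -
  have "(r \<cdot> k) \<cdot> e = x \<cdot> e" using comp_assoc[OF e(2) k r] assms(6,7) by simp
  then show ?thesis using epicD[OF regular_epi_epic[OF e(1)]] comp_hom[OF k r] x e(2) homD by metis
qed

section \<open>Relations and generalized elements\<close>

definition mem2 where
  "mem2 W w R \<longleftrightarrow> (case w of (x, y) \<Rightarrow> case R of (r1, r2) \<Rightarrow>
     (\<exists>u. hom C u W (Dom C r1) \<and> r1 \<cdot> u = x \<and> r2 \<cdot> u = y))"

lemma mem2_iff:
  "mem2 W (x, y) (r1, r2) \<longleftrightarrow> (\<exists>u. hom C u W (Dom C r1) \<and> r1 \<cdot> u = x \<and> r2 \<cdot> u = y)"
  unfolding mem2_def by simp

lemma mem3_iff:
  "mem3 C W (x, y, z) (r1, r2, r3) \<longleftrightarrow>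
     (\<exists>u. hom C u W (Dom C r1) \<and> r1 \<cdot> u = x \<and> r2 \<cdot> u = y \<and> r3 \<cdot> u = z)"
  unfolding mem3_def by simp

lemma rel2_iff: "rel2 C (r1, r2) X Y \<longleftrightarrow> hom C r1 (Dom C r1) X \<and> hom C r2 (Dom C r1) Y \<and>
     (\<forall>W u v. hom C u W (Dom C r1) \<and> hom C v W (Dom C r1) \<and>
        r1 \<cdot> u = r1 \<cdot> v \<and> r2 \<cdot> u = r2 \<cdot> v \<longrightarrow> u = v)"
  unfolding rel2_def by simp

lemma rel3_iff: "rel3 C (r1, r2, r3) X Y Z \<longleftrightarrow>
     hom C r1 (Dom C r1) X \<and> hom C r2 (Dom C r1) Y \<and> hom C r3 (Dom C r1) Z \<and>
     (\<forall>W u v. hom C u W (Dom C r1) \<and> hom C v W (Dom C r1) \<and>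
        r1 \<cdot> u = r1 \<cdot> v \<and> r2 \<cdot> u = r2 \<cdot> v \<and> r3 \<cdot> u = r3 \<cdot> v \<longrightarrow> u = v)"
  unfolding rel3_def by simp

lemma rel2_homs:
  assumes "rel2 C (r1, r2) X Y"
  shows "hom C r1 (Dom C r1) X" "hom C r2 (Dom C r1) Y"
  using assms unfolding rel2_iff by auto

lemma rel2_objs:
  assumes "rel2 C R X Y"
  shows "X \<in> Obj C" "Y \<in> Obj C"
proof -
  obtain r1 r2 where R: "R = (r1, r2)" by fastforce
  show "X \<in> Obj C" "Y \<in> Obj C"
    using hom_objs[OF rel2_homs(1)[OF assms[unfolded R]]] hom_objs[OF rel2_homs(2)[OF assms[unfolded R]]]
    by simp_all
qed

lemma mem2_homs:
  assumes "rel2 C R X Y" "mem2 W (x, y) R"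
  shows "hom C x W X" "hom C y W Y"
proof -
  obtain r1 r2 where R: "R = (r1, r2)" by fastforce
  obtain u where u: "hom C u W (Dom C r1)" "r1 \<cdot> u = x" "r2 \<cdot> u = y"
    using assms(2) unfolding R mem2_iff by blast
  note r = rel2_homs[OF assms(1)[unfolded R]]
  show "hom C x W X" "hom C y W Y" using comp_hom[OF u(1) r(1)] comp_hom[OF u(1) r(2)] u(2,3) by simp_all
qed

lemma mem2_precomp:
  assumes "rel2 C R X Y" "mem2 W (x, y) R" "hom C e W' W"
  shows "mem2 W' (x \<cdot> e, y \<cdot> e) R"
proof -
  obtain r1 r2 where R: "R = (r1, r2)" by fastforce
  obtain u where u: "hom C u W (Dom C r1)" "r1 \<cdot> u = x" "r2 \<cdot> u = y"
    using assms(2) unfolding R mem2_iff by blast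
  note r = rel2_homs[OF assms(1)[unfolded R]]
  have "r1 \<cdot> (u \<cdot> e) = x \<cdot> e" "r2 \<cdot> (u \<cdot> e) = y \<cdot> e"
    using comp_assoc[OF assms(3) u(1) r(1)] comp_assoc[OF assms(3) u(1) r(2)] u(2,3) by simp_all
  then show ?thesis unfolding R mem2_iff using comp_hom[OF assms(3) u(1)] by blast
qed

text \<open>Because the legs are jointly monic, a witness over the cover is constant on the fibres of
  the cover, so it descends.\<close>
lemma mem2_descend:
  assumes R: "rel2 C R X Y" and e: "regular_epi C e" "hom C e W' W"
    and x: "hom C x W X" and y: "hom C y W Y" and m: "mem2 W' (x \<cdot> e, y \<cdot> e) R"
  shows "mem2 W (x, y) R"
proof -
  obtain r1 r2 where R': "R = (r1, r2)" by fastforce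
  obtain t where t: "hom C t W' (Dom C r1)" "r1 \<cdot> t = x \<cdot> e" "r2 \<cdot> t = y \<cdot> e"
    using m unfolding R' mem2_iff by blast
  have r: "hom C r1 (Dom C r1) X" "hom C r2 (Dom C r1) Y"
    and jm: "\<And>V u v. hom C u V (Dom C r1) \<Longrightarrow> hom C v V (Dom C r1) \<Longrightarrow>
        r1 \<cdot> u = r1 \<cdot> v \<Longrightarrow> r2 \<cdot> u = r2 \<cdot> v \<Longrightarrow> u = v"
    using R unfolding R' rel2_iff by blast+
  obtain k where k: "hom C k W (Dom C r1)" "k \<cdot> e = t"
  proof (rule regular_epi_descend[OF e t(1)])
    fix V u v assume u: "hom C u V W'" and v: "hom C v V W'" and euv: "e \<cdot> u = e \<cdot> v"
    show "t \<cdot> u = t \<cdot> v"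
    proof (rule jm[OF comp_hom[OF u t(1)] comp_hom[OF v t(1)]])
      show "r1 \<cdot> (t \<cdot> u) = r1 \<cdot> (t \<cdot> v)"
        using comp_eq_precomp[OF t(2) u t(1) r(1) e(2) x] comp_eq_precomp[OF t(2) v t(1) r(1) e(2) x]
          euv by simp
      show "r2 \<cdot> (t \<cdot> u) = r2 \<cdot> (t \<cdot> v)"
        using comp_eq_precomp[OF t(3) u t(1) r(2) e(2) y] comp_eq_precomp[OF t(3) v t(1) r(2) e(2) y]
          euv by simp
    qed
  qed
  have "r1 \<cdot> k = x" "r2 \<cdot> k = y"
    using regular_epi_cancel_leg[OF e k(1) r(1) x k(2) t(2)]
      regular_epi_cancel_leg[OF e k(1) r(2) y k(2) t(3)] by simp_all
  then show ?thesis unfolding R' mem2_iff using k(1) by blast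
qed

lemma mem3_descend:
  assumes R: "rel3 C (r1, r2, r3) X Y Z" and e: "regular_epi C e" "hom C e W' W"
    and x: "hom C x W X" and y: "hom C y W Y" and z: "hom C z W Z"
    and m: "mem3 C W' (x \<cdot> e, y \<cdot> e, z \<cdot> e) (r1, r2, r3)"
  shows "mem3 C W (x, y, z) (r1, r2, r3)"
proof -
  obtain t where t: "hom C t W' (Dom C r1)" "r1 \<cdot> t = x \<cdot> e" "r2 \<cdot> t = y \<cdot> e" "r3 \<cdot> t = z \<cdot> e"
    using m unfolding mem3_iff by blast
  have r: "hom C r1 (Dom C r1) X" "hom C r2 (Dom C r1) Y" "hom C r3 (Dom C r1) Z"
    and jm: "\<And>V u v. hom C u V (Dom C r1) \<Longrightarrow> hom C v V (Dom C r1) \<Longrightarrow>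
        r1 \<cdot> u = r1 \<cdot> v \<Longrightarrow> r2 \<cdot> u = r2 \<cdot> v \<Longrightarrow> r3 \<cdot> u = r3 \<cdot> v \<Longrightarrow> u = v"
    using R unfolding rel3_iff by blast+
  obtain k where k: "hom C k W (Dom C r1)" "k \<cdot> e = t"
  proof (rule regular_epi_descend[OF e t(1)])
    fix V u v assume u: "hom C u V W'" and v: "hom C v V W'" and euv: "e \<cdot> u = e \<cdot> v"
    show "t \<cdot> u = t \<cdot> v"
    proof (rule jm[OF comp_hom[OF u t(1)] comp_hom[OF v t(1)]])
      show "r1 \<cdot> (t \<cdot> u) = r1 \<cdot> (t \<cdot> v)"
        using comp_eq_precomp[OF t(2) u t(1) r(1) e(2) x] comp_eq_precomp[OF t(2) v t(1) r(1) e(2) x]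
          euv by simp
      show "r2 \<cdot> (t \<cdot> u) = r2 \<cdot> (t \<cdot> v)"
        using comp_eq_precomp[OF t(3) u t(1) r(2) e(2) y] comp_eq_precomp[OF t(3) v t(1) r(2) e(2) y]
          euv by simp
      show "r3 \<cdot> (t \<cdot> u) = r3 \<cdot> (t \<cdot> v)"
        using comp_eq_precomp[OF t(4) u t(1) r(3) e(2) z] comp_eq_precomp[OF t(4) v t(1) r(3) e(2) z]
          euv by simp
    qed
  qed
  have "r1 \<cdot> k = x" "r2 \<cdot> k = y" "r3 \<cdot> k = z"
    using regular_epi_cancel_leg[OF e k(1) r(1) x k(2) t(2)]
      regular_epi_cancel_leg[OF e k(1) r(2) y k(2) t(3)]
      regular_epi_cancel_leg[OF e k(1) r(3) z k(2) t(4)] by simp_all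
  then show ?thesis unfolding mem3_iff using k(1) by blast
qed

lemma rel_le_iff: "rel_le C (r1, r2) S \<longleftrightarrow> mem2 (Dom C r1) (r1, r2) S"
  unfolding rel_le_def mem2_def by (cases S) simp

lemma mem2_generic:
  assumes "rel2 C (r1, r2) X Y"
  shows "mem2 (Dom C r1) (r1, r2) (r1, r2)"
proof -
  note r = rel2_homs[OF assms]
  show ?thesis unfolding mem2_iff using id_hom[OF conjunct1[OF hom_objs[OF r(1)]]] r by force
qed

lemma rel_le_mem2:
  assumes "rel_le C R S" "rel2 C S X Y" "mem2 W (x, y) R"
  shows "mem2 W (x, y) S"
proof -
  obtain r1 r2 s1 s2 where R: "R = (r1, r2)" and S: "S = (s1, s2)" by fastforce
  obtain u where u: "hom C u (Dom C r1) (Dom C s1)" "s1 \<cdot> u = r1" "s2 \<cdot> u = r2"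
    using assms(1) unfolding R S rel_le_def by auto
  obtain v where v: "hom C v W (Dom C r1)" "r1 \<cdot> v = x" "r2 \<cdot> v = y"
    using assms(3) unfolding R mem2_iff by blast
  note s = rel2_homs[OF assms(2)[unfolded S]]
  have "s1 \<cdot> (u \<cdot> v) = x" "s2 \<cdot> (u \<cdot> v) = y"
    using comp_assoc[OF v(1) u(1) s(1)] comp_assoc[OF v(1) u(1) s(2)] u(2,3) v(2,3) by simp_all
  then show ?thesis unfolding S mem2_iff using comp_hom[OF v(1) u(1)] by blast
qed

lemma rel_le_by_mem2:
  assumes "rel2 C R X Y" "\<And>W x y. mem2 W (x, y) R \<Longrightarrow> mem2 W (x, y) S"
  shows "rel_le C R S"
proof -
  obtain r1 r2 where R: "R = (r1, r2)" by fastforce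
  show ?thesis using assms mem2_generic rel_le_iff unfolding R by blast
qed

lemma equiv_mem2_refl:
  assumes E: "equiv_rel C X R" and x: "hom C x W X"
  shows "mem2 W (x, x) R"
proof -
  obtain r1 r2 where R: "R = (r1, r2)" by fastforce
  obtain d where d: "hom C d X (Dom C r1)" "r1 \<cdot> d = Idm C X" "r2 \<cdot> d = Idm C X"
    using E unfolding R equiv_rel_def reflexive_rel_def by auto
  have r: "hom C r1 (Dom C r1) X" "hom C r2 (Dom C r1) X"
    using E unfolding R equiv_rel_def rel2_iff by auto
  have "r1 \<cdot> (d \<cdot> x) = x" "r2 \<cdot> (d \<cdot> x) = x"
    using comp_assoc[OF x d(1) r(1)] comp_assoc[OF x d(1) r(2)] d(2,3) comp_id_left[OF x] by simp_all
  then show ?thesis unfolding R mem2_iff using comp_hom[OF x d(1)] by blast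
qed

lemma equiv_mem2_sym:
  assumes E: "equiv_rel C X R" and m: "mem2 W (x, y) R"
  shows "mem2 W (y, x) R"
proof -
  obtain r1 r2 where R: "R = (r1, r2)" by fastforce
  have r: "hom C r1 (Dom C r1) X" "hom C r2 (Dom C r1) X"
    using E unfolding R equiv_rel_def rel2_iff by auto
  have "Dom C r2 = Dom C r1" using r(2) homD by blast
  then obtain s where s: "hom C s (Dom C r1) (Dom C r1)" "r1 \<cdot> s = r2" "r2 \<cdot> s = r1"
    using E unfolding R equiv_rel_def symmetric_rel_def rel_le_def by auto
  obtain u where u: "hom C u W (Dom C r1)" "r1 \<cdot> u = x" "r2 \<cdot> u = y"
    using m unfolding R mem2_iff by blast
  have "r1 \<cdot> (s \<cdot> u) = y" "r2 \<cdot> (s \<cdot> u) = x"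
    using comp_assoc[OF u(1) s(1) r(1)] comp_assoc[OF u(1) s(1) r(2)] s(2,3) u(2,3) by simp_all
  then show ?thesis unfolding R mem2_iff using comp_hom[OF u(1) s(1)] by blast
qed

lemma equiv_mem2_trans:
  assumes E: "equiv_rel C X R" and m1: "mem2 W (x, y) R" and m2: "mem2 W (y, z) R"
  shows "mem2 W (x, z) R"
proof -
  obtain r1 r2 where R: "R = (r1, r2)" by fastforce
  have r: "hom C r1 (Dom C r1) X" "hom C r2 (Dom C r1) X"
    using E unfolding R equiv_rel_def rel2_iff by auto
  have dom: "Dom C r2 = Dom C r1" using r(2) homD by blast
  obtain p1 p2 where pb: "is_pullback C r2 r1 p1 p2" using pullback_exists[OF r(2) r(1)] .
  obtain t where t: "hom C t (Dom C p1) (Dom C r1)" "r1 \<cdot> t = r1 \<cdot> p1" "r2 \<cdot> t = r2 \<cdot> p2"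
    using E pb unfolding R equiv_rel_def transitive_rel_def by auto
  obtain u where u: "hom C u W (Dom C r1)" "r1 \<cdot> u = x" "r2 \<cdot> u = y"
    using m1 unfolding R mem2_iff by blast
  obtain v where v: "hom C v W (Dom C r1)" "r1 \<cdot> v = y" "r2 \<cdot> v = z"
    using m2 unfolding R mem2_iff by blast
  obtain h where h: "hom C h W (Dom C p1)" "p1 \<cdot> h = u" "p2 \<cdot> h = v"
    using pullback_lift[OF pb] u v dom by metis
  have p: "hom C p1 (Dom C p1) (Dom C r1)" "hom C p2 (Dom C p1) (Dom C r1)"
    using pullbackD(1,2)[OF pb] dom by simp_all
  have "r1 \<cdot> (t \<cdot> h) = x" "r2 \<cdot> (t \<cdot> h) = z"
    using comp_eq_precomp[OF t(2) h(1) t(1) r(1) p(1) r(1)]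
      comp_eq_precomp[OF t(3) h(1) t(1) r(2) p(2) r(2)] h(2,3) u(2) v(3) by simp_all
  then show ?thesis unfolding R mem2_iff using comp_hom[OF h(1) t(1)] by blast
qed


lemma product_exists:
  assumes X: "X \<in> Obj C" and Y: "Y \<in> Obj C"
  obtains p1 p2 where "rel2 C (p1, p2) X Y"
    "\<And>W u v. hom C u W X \<Longrightarrow> hom C v W Y \<Longrightarrow> \<exists>h. hom C h W (Dom C p1) \<and> p1 \<cdot> h = u \<and> p2 \<cdot> h = v"
proof -
  obtain T where "is_terminal C T"
    using is_reg unfolding is_regular_def has_finite_limits_def by blast
  then have T: "\<And>W. W \<in> Obj C \<Longrightarrow> \<exists>!t. hom C t W T" unfolding is_terminal_def by blast
  obtain tX tY where tX: "hom C tX X T" and tY: "hom C tY Y T" using T X Y by blast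
  obtain p q where pb: "is_pullback C tX tY p q" using pullback_exists[OF tX tY] .
  have dom: "Dom C tX = X" "Dom C tY = Y" using tX tY homD by auto
  show ?thesis
  proof (rule that)
    show "rel2 C (p, q) X Y"
      unfolding rel2_iff using pullbackD(1,2)[OF pb] dom pullback_uniq[OF pb] by auto
  next
    fix W u v assume u: "hom C u W X" and v: "hom C v W Y"
    have "tX \<cdot> u = tY \<cdot> v"
      using T[of W] comp_hom[OF u tX] comp_hom[OF v tY] hom_objs[OF u] by blast
    then show "\<exists>h. hom C h W (Dom C p) \<and> p \<cdot> h = u \<and> q \<cdot> h = v"
      using pullback_lift[OF pb] u v dom by metis
  qed
qed

lemma rel2_comp_monic:
  assumes R: "rel2 C (r1, r2) X Y" and m: "monic m" "hom C m I (Dom C r1)"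
  shows "rel2 C (r1 \<cdot> m, r2 \<cdot> m) X Y"
proof -
  note r = rel2_homs[OF R]
  have dom: "Dom C (r1 \<cdot> m) = I" using comp_hom[OF m(2) r(1)] homD by blast
  show ?thesis
    unfolding rel2_iff dom
  proof (intro conjI comp_hom[OF m(2) r(1)] comp_hom[OF m(2) r(2)] allI impI, elim conjE)
    fix W u v assume u: "hom C u W I" and v: "hom C v W I"
      and "(r1 \<cdot> m) \<cdot> u = (r1 \<cdot> m) \<cdot> v" "(r2 \<cdot> m) \<cdot> u = (r2 \<cdot> m) \<cdot> v"
    then have "m \<cdot> u = m \<cdot> v"
      using R comp_hom[OF u m(2)] comp_hom[OF v m(2)] comp_assoc[OF u m(2) r(1)] comp_assoc[OF v m(2) r(1)]
        comp_assoc[OF u m(2) r(2)] comp_assoc[OF v m(2) r(2)] unfolding rel2_iff by metis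
    then show "u = v" using monicD[OF m(1)] u v m(2) homD by metis
  qed
qed

lemma rel3_from_rel2_product:
  assumes S: "rel2 C (s1, s2) X Q" and P: "rel2 C (q1, q2) Y Z" and dom: "Dom C q1 = Q"
  shows "rel3 C (s1, q1 \<cdot> s2, q2 \<cdot> s2) X Y Z"
proof -
  note s = rel2_homs[OF S] and q = rel2_homs[OF P, unfolded dom]
  show ?thesis
    unfolding rel3_iff
  proof (intro conjI s(1) comp_hom[OF s(2) q(1)] comp_hom[OF s(2) q(2)] allI impI, elim conjE)
    fix W u v assume u: "hom C u W (Dom C s1)" and v: "hom C v W (Dom C s1)"
      and e1: "s1 \<cdot> u = s1 \<cdot> v" and "(q1 \<cdot> s2) \<cdot> u = (q1 \<cdot> s2) \<cdot> v" "(q2 \<cdot> s2) \<cdot> u = (q2 \<cdot> s2) \<cdot> v"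
    then have "s2 \<cdot> u = s2 \<cdot> v"
      using P comp_hom[OF u s(2)] comp_hom[OF v s(2)] comp_assoc[OF u s(2) q(1)] comp_assoc[OF v s(2) q(1)]
        comp_assoc[OF u s(2) q(2)] comp_assoc[OF v s(2) q(2)] dom unfolding rel2_iff by metis
    then show "u = v" using S u v e1 unfolding rel2_iff by blast
  qed
qed

lemma image_rel2:
  assumes f: "hom C f P X" and g: "hom C g P Y"
  obtains R where "rel2 C R X Y"
    "\<And>W t. hom C t W P \<Longrightarrow> mem2 W (f \<cdot> t, g \<cdot> t) R"
    "\<And>W x y. mem2 W (x, y) R \<Longrightarrow>
       \<exists>W' e t. hom C e W' W \<and> regular_epi C e \<and> hom C t W' P \<and> f \<cdot> t = x \<cdot> e \<and> g \<cdot> t = y \<cdot> e"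
proof -
  obtain p1 p2 where Pr: "rel2 C (p1, p2) X Y"
    and pair: "\<And>W u v. hom C u W X \<Longrightarrow> hom C v W Y \<Longrightarrow> \<exists>h. hom C h W (Dom C p1) \<and> p1 \<cdot> h = u \<and> p2 \<cdot> h = v"
    by (rule product_exists[OF conjunct2[OF hom_objs[OF f]] conjunct2[OF hom_objs[OF g]]]) (rule that)
  note p = rel2_homs[OF Pr]
  obtain h where h: "hom C h P (Dom C p1)" "p1 \<cdot> h = f" "p2 \<cdot> h = g" using pair[OF f g] by blast
  obtain I e m where e: "hom C e P I" and m: "hom C m I (Dom C p1)" and me: "m \<cdot> e = h"
    and re: "regular_epi C e" and mm: "monic m"
    by (rule image_factorization[OF h(1)])
  have dom: "Dom C (p1 \<cdot> m) = I" using comp_hom[OF m p(1)] homD by blast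
  have f_eq: "(p1 \<cdot> m) \<cdot> (e \<cdot> t) = f \<cdot> t" and g_eq: "(p2 \<cdot> m) \<cdot> (e \<cdot> t) = g \<cdot> t" if "hom C t W P" for W t
    using that e m p unfolding hom_def by (simp_all add: me[symmetric] h(2,3)[symmetric])
  show ?thesis
  proof (rule that[of "(p1 \<cdot> m, p2 \<cdot> m)"])
    show "rel2 C (p1 \<cdot> m, p2 \<cdot> m) X Y" by (rule rel2_comp_monic[OF Pr mm m])
  next
    fix W t assume "hom C t W P"
    then show "mem2 W (f \<cdot> t, g \<cdot> t) (p1 \<cdot> m, p2 \<cdot> m)"
      unfolding mem2_iff dom using comp_hom[OF _ e] f_eq g_eq by metis
  next
    fix W x y assume "mem2 W (x, y) (p1 \<cdot> m, p2 \<cdot> m)"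
    then obtain u where u: "hom C u W I" "(p1 \<cdot> m) \<cdot> u = x" "(p2 \<cdot> m) \<cdot> u = y"
      unfolding mem2_iff dom by blast
    obtain W' e' t where e': "hom C e' W' W" "regular_epi C e'" "hom C t W' P" "e \<cdot> t = u \<cdot> e'"
      by (rule regular_epi_cover[OF re e u(1)])
    have "f \<cdot> t = x \<cdot> e'"
      using f_eq[OF e'(3)] e'(4) comp_assoc[OF e'(1) u(1) comp_hom[OF m p(1)]] u(2) by simp
    moreover have "g \<cdot> t = y \<cdot> e'"
      using g_eq[OF e'(3)] e'(4) comp_assoc[OF e'(1) u(1) comp_hom[OF m p(2)]] u(3) by simp
    ultimately    show "\<exists>W' e t. hom C e W' W \<and> regular_epi C e \<and> hom C t W' P \<and> f \<cdot> t = x \<cdot> e \<and> g \<cdot> t = y \<cdot> e"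
      using e' by blast
  qed
qed

lemma image_rel3:
  assumes f: "hom C f P X" and g: "hom C g P Y" and h: "hom C h P Z"
  obtains R where "rel3 C R X Y Z"
    "\<And>W t. hom C t W P \<Longrightarrow> mem3 C W (f \<cdot> t, g \<cdot> t, h \<cdot> t) R"
    "\<And>W x y z. mem3 C W (x, y, z) R \<Longrightarrow> \<exists>W' e t. hom C e W' W \<and> regular_epi C e \<and> hom C t W' P \<and>
       f \<cdot> t = x \<cdot> e \<and> g \<cdot> t = y \<cdot> e \<and> h \<cdot> t = z \<cdot> e"
proof -
  obtain q1 q2 where Q: "rel2 C (q1, q2) Y Z"
    and pair: "\<And>W u v. hom C u W Y \<Longrightarrow> hom C v W Z \<Longrightarrow> \<exists>k. hom C k W (Dom C q1) \<and> q1 \<cdot> k = u \<and> q2 \<cdot> k = v"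
    by (rule product_exists[OF conjunct2[OF hom_objs[OF g]] conjunct2[OF hom_objs[OF h]]]) (rule that)
  note q = rel2_homs[OF Q]
  obtain k where k: "hom C k P (Dom C q1)" "q1 \<cdot> k = g" "q2 \<cdot> k = h" using pair[OF g h] by blast
  obtain S where S: "rel2 C S X (Dom C q1)"
    and intro: "\<And>W t. hom C t W P \<Longrightarrow> mem2 W (f \<cdot> t, k \<cdot> t) S"
    and elim: "\<And>W x y. mem2 W (x, y) S \<Longrightarrow>
       \<exists>W' e t. hom C e W' W \<and> regular_epi C e \<and> hom C t W' P \<and> f \<cdot> t = x \<cdot> e \<and> k \<cdot> t = y \<cdot> e"
    by (rule image_rel2[OF f k(1)]) (rule that)
  obtain s1 s2 where Ss: "S = (s1, s2)" by fastforce
  note s = rel2_homs[OF S[unfolded Ss]]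
  show ?thesis
  proof (rule that[of "(s1, q1 \<cdot> s2, q2 \<cdot> s2)"])
    show "rel3 C (s1, q1 \<cdot> s2, q2 \<cdot> s2) X Y Z" by (rule rel3_from_rel2_product[OF S[unfolded Ss] Q refl])
  next
    fix W t assume t: "hom C t W P"
    obtain u where u: "hom C u W (Dom C s1)" "s1 \<cdot> u = f \<cdot> t" "s2 \<cdot> u = k \<cdot> t"
      using intro[OF t] unfolding Ss mem2_iff by blast
    have "(q1 \<cdot> s2) \<cdot> u = g \<cdot> t" "(q2 \<cdot> s2) \<cdot> u = h \<cdot> t"
      using t u(1) s q k(1) unfolding hom_def by (simp_all add: k(2,3)[symmetric] u(3))
    then show "mem3 C W (f \<cdot> t, g \<cdot> t, h \<cdot> t) (s1, q1 \<cdot> s2, q2 \<cdot> s2)"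
      unfolding mem3_iff using u(1,2) by blast
  next
    fix W x y z assume "mem3 C W (x, y, z) (s1, q1 \<cdot> s2, q2 \<cdot> s2)"
    then obtain u where u: "hom C u W (Dom C s1)" "s1 \<cdot> u = x" "(q1 \<cdot> s2) \<cdot> u = y" "(q2 \<cdot> s2) \<cdot> u = z"
      unfolding mem3_iff by blast
    then have "mem2 W (x, s2 \<cdot> u) S" unfolding Ss mem2_iff by blast
    then obtain W' e t where e: "hom C e W' W" "regular_epi C e" "hom C t W' P" "f \<cdot> t = x \<cdot> e"
      and kt: "k \<cdot> t = (s2 \<cdot> u) \<cdot> e"
      using elim by blast
    have "g \<cdot> t = y \<cdot> e" "h \<cdot> t = z \<cdot> e"
      using e(1,3) u(1) s q k(1) unfolding hom_def by (simp_all add: k(2,3)[symmetric] u(3,4)[symmetric] kt)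
    then show "\<exists>W' e t. hom C e W' W \<and> regular_epi C e \<and> hom C t W' P \<and>
       f \<cdot> t = x \<cdot> e \<and> g \<cdot> t = y \<cdot> e \<and> h \<cdot> t = z \<cdot> e"
      using e by blast
  qed
qed

lemma kernel_pair_rel:
  assumes f: "hom C f P Q"
  obtains K where "rel2 C K P P"
    "\<And>W a b. mem2 W (a, b) K \<longleftrightarrow> hom C a W P \<and> hom C b W P \<and> f \<cdot> a = f \<cdot> b"
proof -
  obtain k1 k2 where kp: "is_pullback C f f k1 k2" using pullback_exists[OF f f] .
  note D = pullbackD[OF kp]
  have dom: "Dom C f = P" using f homD by blast
  have k: "hom C k1 (Dom C k1) P" "hom C k2 (Dom C k1) P" using D(1,2) dom by simp_all
  show ?thesis
  proof (rule that[of "(k1, k2)"])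
    show "rel2 C (k1, k2) P P" unfolding rel2_iff using k pullback_uniq[OF kp] by blast
  next
    fix W a b
    show "mem2 W (a, b) (k1, k2) \<longleftrightarrow> hom C a W P \<and> hom C b W P \<and> f \<cdot> a = f \<cdot> b"
    proof
      assume "mem2 W (a, b) (k1, k2)"
      then obtain u where u: "hom C u W (Dom C k1)" "k1 \<cdot> u = a" "k2 \<cdot> u = b" unfolding mem2_iff by blast
      then show "hom C a W P \<and> hom C b W P \<and> f \<cdot> a = f \<cdot> b"
        using comp_eq_precomp[OF D(3) u(1) k(1) f k(2) f] comp_hom[OF u(1) k(1)] comp_hom[OF u(1) k(2)]
        by simp
    next
      assume "hom C a W P \<and> hom C b W P \<and> f \<cdot> a = f \<cdot> b"
      then show "mem2 W (a, b) (k1, k2)" unfolding mem2_iff using pullback_lift[OF kp] dom by metis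
    qed
  qed
qed

lemma rel2_common_witnesses:
  assumes A: "rel2 C (a1, a2) X Y" and B: "rel2 C (b1, b2) X Y"
  obtains qa qb where "hom C qa (Dom C qa) (Dom C a1)" "hom C qb (Dom C qa) (Dom C b1)"
    "b1 \<cdot> qb = a1 \<cdot> qa" "b2 \<cdot> qb = a2 \<cdot> qa"
    "\<And>W u v. hom C u W (Dom C a1) \<Longrightarrow> hom C v W (Dom C b1) \<Longrightarrow> a1 \<cdot> u = b1 \<cdot> v \<Longrightarrow> a2 \<cdot> u = b2 \<cdot> v \<Longrightarrow>
       \<exists>k. hom C k W (Dom C qa) \<and> qa \<cdot> k = u"
proof -
  note a = rel2_homs[OF A] and b = rel2_homs[OF B]
  obtain p1 p2 where Pr: "rel2 C (p1, p2) X Y"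
    and pair: "\<And>W u v. hom C u W X \<Longrightarrow> hom C v W Y \<Longrightarrow> \<exists>h. hom C h W (Dom C p1) \<and> p1 \<cdot> h = u \<and> p2 \<cdot> h = v"
    by (rule product_exists[OF rel2_objs[OF A]]) (rule that)
  note p = rel2_homs[OF Pr]
  obtain hA where hA: "hom C hA (Dom C a1) (Dom C p1)" "p1 \<cdot> hA = a1" "p2 \<cdot> hA = a2" using pair[OF a] by blast
  obtain hB where hB: "hom C hB (Dom C b1) (Dom C p1)" "p1 \<cdot> hB = b1" "p2 \<cdot> hB = b2" using pair[OF b] by blast
  obtain qa qb where pb: "is_pullback C hA hB qa qb" using pullback_exists[OF hA(1) hB(1)] .
  have qa: "hom C qa (Dom C qa) (Dom C a1)" and qb: "hom C qb (Dom C qa) (Dom C b1)"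
    using pullbackD(1,2)[OF pb] hA(1) hB(1) homD by metis+
  show ?thesis
  proof (rule that[OF qa qb])
    show "b1 \<cdot> qb = a1 \<cdot> qa" "b2 \<cdot> qb = a2 \<cdot> qa"
      using pullbackD(3)[OF pb] comp_assoc[OF qa hA(1)] comp_assoc[OF qb hB(1)] p hA(2,3) hB(2,3) by metis+
  next
    fix W u v assume u: "hom C u W (Dom C a1)" and v: "hom C v W (Dom C b1)"
      and "a1 \<cdot> u = b1 \<cdot> v" "a2 \<cdot> u = b2 \<cdot> v"
    then have "hA \<cdot> u = hB \<cdot> v"
      using Pr comp_hom[OF u hA(1)] comp_hom[OF v hB(1)] comp_assoc[OF u hA(1)] comp_assoc[OF v hB(1)]
        p hA(2,3) hB(2,3) unfolding rel2_iff by metis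
    then show "\<exists>k. hom C k W (Dom C qa) \<and> qa \<cdot> k = u"
      using pullback_lift[OF pb] u v hA(1) hB(1) homD by metis
  qed
qed

lemma rel_intersection:
  assumes A: "rel2 C A X Y" and B: "rel2 C B X Y"
  obtains N where "rel2 C N X Y" "\<And>W x y. mem2 W (x, y) N \<longleftrightarrow> mem2 W (x, y) A \<and> mem2 W (x, y) B"
proof -
  obtain a1 a2 b1 b2 where AB: "A = (a1, a2)" "B = (b1, b2)" by fastforce
  note a = rel2_homs[OF A[unfolded AB(1)]] and b = rel2_homs[OF B[unfolded AB(2)]]
  obtain qa qb where qa: "hom C qa (Dom C qa) (Dom C a1)" and qb: "hom C qb (Dom C qa) (Dom C b1)"
    and legs: "b1 \<cdot> qb = a1 \<cdot> qa" "b2 \<cdot> qb = a2 \<cdot> qa"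
    and lift: "\<And>W u v. hom C u W (Dom C a1) \<Longrightarrow> hom C v W (Dom C b1) \<Longrightarrow> a1 \<cdot> u = b1 \<cdot> v \<Longrightarrow>
       a2 \<cdot> u = b2 \<cdot> v \<Longrightarrow> \<exists>k. hom C k W (Dom C qa) \<and> qa \<cdot> k = u"
    by (rule rel2_common_witnesses[OF A[unfolded AB(1)] B[unfolded AB(2)]]) (rule that)
  obtain N where N: "rel2 C N X Y"
    and intro: "\<And>W t. hom C t W (Dom C qa) \<Longrightarrow> mem2 W ((a1 \<cdot> qa) \<cdot> t, (a2 \<cdot> qa) \<cdot> t) N"
    and cover: "\<And>W x y. mem2 W (x, y) N \<Longrightarrow> \<exists>W' e t. hom C e W' W \<and> regular_epi C e \<and>
       hom C t W' (Dom C qa) \<and> (a1 \<cdot> qa) \<cdot> t = x \<cdot> e \<and> (a2 \<cdot> qa) \<cdot> t = y \<cdot> e"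
    by (rule image_rel2[OF comp_hom[OF qa a(1)] comp_hom[OF qa a(2)]]) (rule that)
  have "mem2 W (x, y) N \<longleftrightarrow> mem2 W (x, y) A \<and> mem2 W (x, y) B" for W x y
  proof
    assume m: "mem2 W (x, y) N"
    obtain W' e t where e: "hom C e W' W" "regular_epi C e" "hom C t W' (Dom C qa)"
      and "(a1 \<cdot> qa) \<cdot> t = x \<cdot> e" "(a2 \<cdot> qa) \<cdot> t = y \<cdot> e"
      using cover[OF m] by blast
    then have "mem2 W' (x \<cdot> e, y \<cdot> e) A" "mem2 W' (x \<cdot> e, y \<cdot> e) B"
      unfolding AB mem2_iff using comp_hom[OF e(3) qa] comp_hom[OF e(3) qb] legs
        comp_assoc[OF e(3) qa a(1)] comp_assoc[OF e(3) qa a(2)]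
        comp_assoc[OF e(3) qb b(1)] comp_assoc[OF e(3) qb b(2)] by metis+
    then show "mem2 W (x, y) A \<and> mem2 W (x, y) B"
      using mem2_descend[OF A e(2,1)] mem2_descend[OF B e(2,1)] mem2_homs[OF N m] by blast
  next
    assume "mem2 W (x, y) A \<and> mem2 W (x, y) B"
    then obtain u v where u: "hom C u W (Dom C a1)" "a1 \<cdot> u = x" "a2 \<cdot> u = y"
      and v: "hom C v W (Dom C b1)" "b1 \<cdot> v = x" "b2 \<cdot> v = y" unfolding AB mem2_iff by blast
    then obtain k where k: "hom C k W (Dom C qa)" "qa \<cdot> k = u" using lift by metis
    then show "mem2 W (x, y) N" using intro[OF k(1)] comp_assoc[OF k(1) qa] a u(2,3) by metis
  qed
  with N show ?thesis by (rule that)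
qed

lemma rel_composite:
  assumes B: "rel2 C B X Y" and D: "rel2 C D Y Z"
  obtains K where "rel2 C K X Z"
    "\<And>W x y z. mem2 W (x, y) B \<Longrightarrow> mem2 W (y, z) D \<Longrightarrow> mem2 W (x, z) K"
    "\<And>W x z. mem2 W (x, z) K \<Longrightarrow> \<exists>W' e y. hom C e W' W \<and> regular_epi C e \<and>
        mem2 W' (x \<cdot> e, y) B \<and> mem2 W' (y, z \<cdot> e) D"
proof -
  obtain b1 b2 d1 d2 where BD: "B = (b1, b2)" "D = (d1, d2)" by fastforce
  note b = rel2_homs[OF B[unfolded BD(1)]] and d = rel2_homs[OF D[unfolded BD(2)]]
  obtain p q where pb: "is_pullback C b2 d1 p q" using pullback_exists[OF b(2) d(1)] .
  have p: "hom C p (Dom C p) (Dom C b1)" and q: "hom C q (Dom C p) (Dom C d1)"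
    using pullbackD(1,2)[OF pb] b(2) homD by metis+
  obtain K where K: "rel2 C K X Z"
    and intro: "\<And>W t. hom C t W (Dom C p) \<Longrightarrow> mem2 W ((b1 \<cdot> p) \<cdot> t, (d2 \<cdot> q) \<cdot> t) K"
    and cover: "\<And>W x z. mem2 W (x, z) K \<Longrightarrow> \<exists>W' e t. hom C e W' W \<and> regular_epi C e \<and>
       hom C t W' (Dom C p) \<and> (b1 \<cdot> p) \<cdot> t = x \<cdot> e \<and> (d2 \<cdot> q) \<cdot> t = z \<cdot> e"
    by (rule image_rel2[OF comp_hom[OF p b(1)] comp_hom[OF q d(2)]]) (rule that)
  show ?thesis
  proof (rule that[OF K])
    fix W x y z assume "mem2 W (x, y) B" "mem2 W (y, z) D"
    then obtain u v where u: "hom C u W (Dom C b1)" "b1 \<cdot> u = x" "b2 \<cdot> u = y"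
      and v: "hom C v W (Dom C d1)" "d1 \<cdot> v = y" "d2 \<cdot> v = z" unfolding BD mem2_iff by blast
    obtain h where h: "hom C h W (Dom C p)" "p \<cdot> h = u" "q \<cdot> h = v"
      using pullback_lift[OF pb] u v b(2) homD by metis
    then show "mem2 W (x, z) K"
      using intro[OF h(1)] comp_assoc[OF h(1) p b(1)] comp_assoc[OF h(1) q d(2)] u(2) v(3) by simp
  next
    fix W x z assume "mem2 W (x, z) K"
    then obtain W' e t where e: "hom C e W' W" "regular_epi C e" "hom C t W' (Dom C p)"
      and "(b1 \<cdot> p) \<cdot> t = x \<cdot> e" "(d2 \<cdot> q) \<cdot> t = z \<cdot> e"
      using cover by blast
    then have "mem2 W' (x \<cdot> e, b2 \<cdot> (p \<cdot> t)) B" "mem2 W' (b2 \<cdot> (p \<cdot> t), z \<cdot> e) D"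
      unfolding BD mem2_iff using comp_hom[OF e(3) p] comp_hom[OF e(3) q]
        comp_assoc[OF e(3) p b(1)] comp_assoc[OF e(3) q d(2)]
        comp_eq_precomp[OF pullbackD(3)[OF pb] e(3) p b(2) q d(1)] by metis+
    then show "\<exists>W' e y. hom C e W' W \<and> regular_epi C e \<and>
        mem2 W' (x \<cdot> e, y) B \<and> mem2 W' (y, z \<cdot> e) D" using e by blast
  qed
qed

lemma triple_pullback_exists:
  assumes f: "hom C f A X" and g: "hom C g B X" and h: "hom C h D X"
  obtains u v w where "hom C u (Dom C v) A" "hom C v (Dom C v) B" "hom C w (Dom C v) D"
    "f \<cdot> u = g \<cdot> v" "h \<cdot> w = g \<cdot> v"
    "\<And>W a b d. hom C a W A \<Longrightarrow> hom C b W B \<Longrightarrow> hom C d W D \<Longrightarrow> f \<cdot> a = g \<cdot> b \<Longrightarrow> h \<cdot> d = g \<cdot> b \<Longrightarrow>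
       \<exists>k. hom C k W (Dom C v) \<and> u \<cdot> k = a \<and> v \<cdot> k = b \<and> w \<cdot> k = d"
proof -
  have dom: "Dom C f = A" "Dom C g = B" "Dom C h = D" using f g h homD by auto
  obtain p q where pb1: "is_pullback C f h p q" using pullback_exists[OF f h] .
  note P1 = pullbackD[OF pb1, unfolded dom]
  have fp: "hom C (f \<cdot> p) (Dom C p) X" using comp_hom[OF P1(1) f] .
  have dom_fp: "Dom C (f \<cdot> p) = Dom C p" using fp homD by blast
  obtain p' v where pb2: "is_pullback C (f \<cdot> p) g p' v" using pullback_exists[OF fp g] .
  note P2 = pullbackD[OF pb2, unfolded dom dom_fp]
  show ?thesis
  proof (rule that[of "p \<cdot> p'" v "q \<cdot> p'"])
    show "hom C (p \<cdot> p') (Dom C v) A" "hom C (q \<cdot> p') (Dom C v) D" "hom C v (Dom C v) B"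
      using comp_hom[OF _ P1(1)] comp_hom[OF _ P1(2)] P2(1,2) pullbackD(2)[OF pb2] homD by metis+
    show "f \<cdot> (p \<cdot> p') = g \<cdot> v" "h \<cdot> (q \<cdot> p') = g \<cdot> v"
      using P2(3) comp_assoc[OF P2(1) P1(1) f] comp_assoc[OF P2(1) P1(2) h] P1(3) by simp_all
  next
    fix W a b d assume a: "hom C a W A" and b: "hom C b W B" and d: "hom C d W D"
      and ab: "f \<cdot> a = g \<cdot> b" and db: "h \<cdot> d = g \<cdot> b"
    obtain k1 where k1: "hom C k1 W (Dom C p)" "p \<cdot> k1 = a" "q \<cdot> k1 = d"
      by (rule pullback_lift[OF pb1 a[folded dom(1)] d[folded dom(3)]]) (use ab db in simp_all)
    have "(f \<cdot> p) \<cdot> k1 = g \<cdot> b" using comp_assoc[OF k1(1) P1(1) f] k1(2) ab by simp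
    then obtain k where k: "hom C k W (Dom C p')" "p' \<cdot> k = k1" "v \<cdot> k = b"
      by (rule pullback_lift[OF pb2 k1(1)[folded dom_fp] b[folded dom(2)]]) (rule that)
    have "Dom C v = Dom C p'" using homD[OF pullbackD(2)[OF pb2]] by blast
    then show "\<exists>k. hom C k W (Dom C v) \<and> (p \<cdot> p') \<cdot> k = a \<and> v \<cdot> k = b \<and> (q \<cdot> p') \<cdot> k = d"
      using k comp_assoc[OF k(1) P2(1) P1(1)] comp_assoc[OF k(1) P2(1) P1(2)] k1(2,3) by auto
  qed
qed

lemma ternary_rel:
  assumes A: "rel2 C A X X" and B: "rel2 C B X X" and D: "rel2 C D X X"
  obtains T where "rel3 C T X X X"
    "\<And>W p q r w. mem2 W (p, w) B \<Longrightarrow> mem2 W (q, w) A \<Longrightarrow> mem2 W (w, r) D \<Longrightarrow> mem3 C W (p, q, r) T"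
    "\<And>W p q r. mem3 C W (p, q, r) T \<Longrightarrow> \<exists>W' e w. hom C e W' W \<and> regular_epi C e \<and>
       mem2 W' (p \<cdot> e, w) B \<and> mem2 W' (q \<cdot> e, w) A \<and> mem2 W' (w, r \<cdot> e) D"
proof -
  obtain a1 a2 b1 b2 d1 d2 where ABD: "A = (a1, a2)" "B = (b1, b2)" "D = (d1, d2)" by fastforce
  note a = rel2_homs[OF A[unfolded ABD(1)]] and b = rel2_homs[OF B[unfolded ABD(2)]]
    and d = rel2_homs[OF D[unfolded ABD(3)]]
  obtain u v w where u: "hom C u (Dom C v) (Dom C b1)" and v: "hom C v (Dom C v) (Dom C a1)"
    and w: "hom C w (Dom C v) (Dom C d1)" and bv: "b2 \<cdot> u = a2 \<cdot> v" and dv: "d1 \<cdot> w = a2 \<cdot> v"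
    and lift: "\<And>W ub ua ud. hom C ub W (Dom C b1) \<Longrightarrow> hom C ua W (Dom C a1) \<Longrightarrow> hom C ud W (Dom C d1) \<Longrightarrow>
       b2 \<cdot> ub = a2 \<cdot> ua \<Longrightarrow> d1 \<cdot> ud = a2 \<cdot> ua \<Longrightarrow>
       \<exists>k. hom C k W (Dom C v) \<and> u \<cdot> k = ub \<and> v \<cdot> k = ua \<and> w \<cdot> k = ud"
    by (rule triple_pullback_exists[OF b(2) a(2) d(1)]) (rule that)
  obtain T where T: "rel3 C T X X X"
    and intro: "\<And>W t. hom C t W (Dom C v) \<Longrightarrow> mem3 C W ((b1 \<cdot> u) \<cdot> t, (a1 \<cdot> v) \<cdot> t, (d2 \<cdot> w) \<cdot> t) T"
    and cover: "\<And>W x y z. mem3 C W (x, y, z) T \<Longrightarrow> \<exists>W' e t. hom C e W' W \<and> regular_epi C e \<and>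
       hom C t W' (Dom C v) \<and> (b1 \<cdot> u) \<cdot> t = x \<cdot> e \<and> (a1 \<cdot> v) \<cdot> t = y \<cdot> e \<and> (d2 \<cdot> w) \<cdot> t = z \<cdot> e"
    by (rule image_rel3[OF comp_hom[OF u b(1)] comp_hom[OF v a(1)] comp_hom[OF w d(2)]]) (rule that)
  show ?thesis
  proof (rule that[OF T])
    fix W p q r m assume "mem2 W (p, m) B" "mem2 W (q, m) A" "mem2 W (m, r) D"
    then obtain ub ua ud where ub: "hom C ub W (Dom C b1)" "b1 \<cdot> ub = p" "b2 \<cdot> ub = m"
      and ua: "hom C ua W (Dom C a1)" "a1 \<cdot> ua = q" "a2 \<cdot> ua = m"
      and ud: "hom C ud W (Dom C d1)" "d1 \<cdot> ud = m" "d2 \<cdot> ud = r"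
      unfolding ABD mem2_iff by blast
    then obtain k where "hom C k W (Dom C v)" "u \<cdot> k = ub" "v \<cdot> k = ua" "w \<cdot> k = ud"
      using lift by metis
    then show "mem3 C W (p, q, r) T"
      using intro comp_assoc[OF _ u b(1)] comp_assoc[OF _ v a(1)] comp_assoc[OF _ w d(2)] ub ua ud by metis
  next
    fix W p q r assume "mem3 C W (p, q, r) T"
    then obtain W' e t where e: "hom C e W' W" "regular_epi C e" "hom C t W' (Dom C v)"
      and "(b1 \<cdot> u) \<cdot> t = p \<cdot> e" "(a1 \<cdot> v) \<cdot> t = q \<cdot> e" "(d2 \<cdot> w) \<cdot> t = r \<cdot> e"
      using cover by blast
    moreover have "b2 \<cdot> (u \<cdot> t) = a2 \<cdot> (v \<cdot> t)" "d1 \<cdot> (w \<cdot> t) = a2 \<cdot> (v \<cdot> t)"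
      using comp_eq_precomp[OF bv e(3) u b(2) v a(2)] comp_eq_precomp[OF dv e(3) w d(1) v a(2)] by simp_all
    ultimately have "mem2 W' (p \<cdot> e, a2 \<cdot> (v \<cdot> t)) B" "mem2 W' (q \<cdot> e, a2 \<cdot> (v \<cdot> t)) A"
      "mem2 W' (a2 \<cdot> (v \<cdot> t), r \<cdot> e) D"
      unfolding ABD mem2_iff using comp_hom[OF e(3) u] comp_hom[OF e(3) v] comp_hom[OF e(3) w]
        comp_assoc[OF e(3) u b(1)] comp_assoc[OF e(3) v a(1)] comp_assoc[OF e(3) w d(2)] by metis+
    then show "\<exists>W' e w. hom C e W' W \<and> regular_epi C e \<and>
       mem2 W' (p \<cdot> e, w) B \<and> mem2 W' (q \<cdot> e, w) A \<and> mem2 W' (w, r \<cdot> e) D" using e by blast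
  qed
qed

lemma equiv_rel2: "equiv_rel C X R \<Longrightarrow> rel2 C R X X"
  unfolding equiv_rel_def by blast

lemma equiv_obj: "equiv_rel C X R \<Longrightarrow> X \<in> Obj C"
  using rel2_objs(1)[OF equiv_rel2] .

lemma eq_meet_equiv: "is_eq_meet C X A B M \<Longrightarrow> equiv_rel C X M"
  unfolding is_eq_meet_def by blast

lemma eq_join_equiv: "is_eq_join C X A B J \<Longrightarrow> equiv_rel C X J"
  unfolding is_eq_join_def by blast

end

section \<open>Meets and joins of equivalence relations\<close>

locale regular_maltsev_cat = regular_cat +
  assumes is_maltsev: "is_maltsev C"
begin

lemma reflexive_rel2_equiv:
  assumes R: "rel2 C R X X" and m: "mem2 X (Idm C X, Idm C X) R"
  shows "equiv_rel C X R"
proof -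
  have "X \<in> Obj C" using rel2_objs[OF R] by simp
  moreover have "reflexive_rel C X R" using m unfolding reflexive_rel_def mem2_def by simp
  ultimately show ?thesis using is_maltsev R unfolding is_maltsev_def by blast
qed

lemma kernel_pair_equiv:
  assumes f: "hom C f P Q"
  obtains K where "equiv_rel C P K"
    "\<And>W a b. mem2 W (a, b) K \<longleftrightarrow> hom C a W P \<and> hom C b W P \<and> f \<cdot> a = f \<cdot> b"
proof -
  obtain K where K: "rel2 C K P P"
    and mem: "\<And>W a b. mem2 W (a, b) K \<longleftrightarrow> hom C a W P \<and> hom C b W P \<and> f \<cdot> a = f \<cdot> b"
    by (rule kernel_pair_rel[OF f]) (rule that)
  have "P \<in> Obj C" using f hom_objs by blast
  then have "equiv_rel C P K" by (intro reflexive_rel2_equiv[OF K]) (simp add: mem id_hom)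
  then show ?thesis using mem by (rule that)
qed

lemma intersection_eq_meet:
  assumes A: "equiv_rel C X A" and B: "equiv_rel C X B"
  obtains M where "is_eq_meet C X A B M"
    "\<And>W x y. mem2 W (x, y) M \<longleftrightarrow> mem2 W (x, y) A \<and> mem2 W (x, y) B"
proof -
  have X: "X \<in> Obj C" using equiv_obj[OF A] .
  obtain N where N: "rel2 C N X X"
    and mem: "\<And>W x y. mem2 W (x, y) N \<longleftrightarrow> mem2 W (x, y) A \<and> mem2 W (x, y) B"
    by (rule rel_intersection[OF equiv_rel2[OF A] equiv_rel2[OF B]]) (rule that)
  have "equiv_rel C X N"
    by (rule reflexive_rel2_equiv[OF N]) (simp add: mem equiv_mem2_refl[OF A id_hom[OF X]]
        equiv_mem2_refl[OF B id_hom[OF X]])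
  moreover have "rel_le C N A" "rel_le C N B"
    by (rule rel_le_by_mem2[OF N], simp add: mem)+
  moreover have "rel_le C K N" if K: "equiv_rel C X K" "rel_le C K A" "rel_le C K B" for K
    using rel_le_by_mem2[OF equiv_rel2[OF K(1)]] rel_le_mem2[OF K(2) equiv_rel2[OF A]]
      rel_le_mem2[OF K(3) equiv_rel2[OF B]] mem by blast
  ultimately have "is_eq_meet C X A B N" unfolding is_eq_meet_def by blast
  then show ?thesis using mem by (rule that)
qed

text \<open>The composite is reflexive, hence an equivalence relation by the Mal'tsev property.\<close>
lemma composite_eq_join:
  assumes B: "equiv_rel C X B" and D: "equiv_rel C X D"
  obtains J where "is_eq_join C X B D J"
    "\<And>W x z. mem2 W (x, z) J \<Longrightarrow> \<exists>W' e y. hom C e W' W \<and> regular_epi C e \<and>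
        mem2 W' (x \<cdot> e, y) B \<and> mem2 W' (y, z \<cdot> e) D"
proof -
  have X: "X \<in> Obj C" using equiv_obj[OF B] .
  obtain K where K: "rel2 C K X X"
    and intro: "\<And>W x y z. mem2 W (x, y) B \<Longrightarrow> mem2 W (y, z) D \<Longrightarrow> mem2 W (x, z) K"
    and elim: "\<And>W x z. mem2 W (x, z) K \<Longrightarrow> \<exists>W' e y. hom C e W' W \<and> regular_epi C e \<and>
        mem2 W' (x \<cdot> e, y) B \<and> mem2 W' (y, z \<cdot> e) D"
    by (rule rel_composite[OF equiv_rel2[OF B] equiv_rel2[OF D]]) (rule that)
  have KE: "equiv_rel C X K"
    by (rule reflexive_rel2_equiv[OF K])
      (rule intro[OF equiv_mem2_refl[OF B id_hom[OF X]] equiv_mem2_refl[OF D id_hom[OF X]]])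
  have "rel_le C B K"
    by (rule rel_le_by_mem2[OF equiv_rel2[OF B]])
      (use intro equiv_mem2_refl[OF D] mem2_homs[OF equiv_rel2[OF B]] in blast)
  moreover have "rel_le C D K"
    by (rule rel_le_by_mem2[OF equiv_rel2[OF D]])
      (use intro equiv_mem2_refl[OF B] mem2_homs[OF equiv_rel2[OF D]] in blast)
  moreover have "rel_le C K N"
    if N: "equiv_rel C X N" "rel_le C B N" "rel_le C D N" for N
  proof (rule rel_le_by_mem2[OF K])
    fix W x z assume m: "mem2 W (x, z) K"
    obtain W' e y where e: "hom C e W' W" "regular_epi C e" and
      "mem2 W' (x \<cdot> e, y) B" "mem2 W' (y, z \<cdot> e) D" using elim[OF m] by blast
    then have "mem2 W' (x \<cdot> e, y) N" "mem2 W' (y, z \<cdot> e) N"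
      using rel_le_mem2[OF N(2) equiv_rel2[OF N(1)]] rel_le_mem2[OF N(3) equiv_rel2[OF N(1)]] by blast+
    then have "mem2 W' (x \<cdot> e, z \<cdot> e) N" by (rule equiv_mem2_trans[OF N(1)])
    then show "mem2 W (x, z) N"
      using mem2_descend[OF equiv_rel2[OF N(1)] e(2,1)] mem2_homs[OF K m] by blast
  qed
  ultimately have "is_eq_join C X B D K" unfolding is_eq_join_def using KE by blast
  then show ?thesis using elim by (rule that)
qed

lemma eq_meet_exists:
  assumes "equiv_rel C X A" "equiv_rel C X B"
  shows "\<exists>M. is_eq_meet C X A B M"
proof -
  obtain M where "is_eq_meet C X A B M" by (rule intersection_eq_meet[OF assms]) (rule that)
  then show ?thesis ..
qed

lemma eq_join_exists:
  assumes "equiv_rel C X A" "equiv_rel C X B"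
  shows "\<exists>J. is_eq_join C X A B J"
proof -
  obtain J where "is_eq_join C X A B J" by (rule composite_eq_join[OF assms]) (rule that)
  then show ?thesis ..
qed

lemma eq_meet_mem2_iff:
  assumes M: "is_eq_meet C X A B M" and A: "equiv_rel C X A" and B: "equiv_rel C X B"
  shows "mem2 W (x, y) M \<longleftrightarrow> mem2 W (x, y) A \<and> mem2 W (x, y) B"
proof -
  obtain N where N: "is_eq_meet C X A B N"
    and mem: "\<And>W x y. mem2 W (x, y) N \<longleftrightarrow> mem2 W (x, y) A \<and> mem2 W (x, y) B"
    by (rule intersection_eq_meet[OF A B]) (rule that)
  have "rel_le C N M" "rel_le C M N" using M N unfolding is_eq_meet_def by blast+
  then show ?thesis
    using mem rel_le_mem2 equiv_rel2[OF eq_meet_equiv[OF M]] equiv_rel2[OF eq_meet_equiv[OF N]] by blast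
qed

lemma eq_join_mem2I1: "is_eq_join C X A B J \<Longrightarrow> mem2 W (x, y) A \<Longrightarrow> mem2 W (x, y) J"
  using rel_le_mem2 unfolding is_eq_join_def equiv_rel_def by blast

lemma eq_join_mem2I2: "is_eq_join C X A B J \<Longrightarrow> mem2 W (x, y) B \<Longrightarrow> mem2 W (x, y) J"
  using rel_le_mem2 unfolding is_eq_join_def equiv_rel_def by blast

lemma eq_join_mem2E:
  assumes J: "is_eq_join C X B D J" and B: "equiv_rel C X B" and D: "equiv_rel C X D"
    and m: "mem2 W (x, z) J"
  obtains W' e y where "hom C e W' W" "regular_epi C e" "mem2 W' (x \<cdot> e, y) B" "mem2 W' (y, z \<cdot> e) D"
proof -
  obtain K where K: "is_eq_join C X B D K"
    and elim: "\<And>W x z. mem2 W (x, z) K \<Longrightarrow> \<exists>W' e y. hom C e W' W \<and> regular_epi C e \<and>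
        mem2 W' (x \<cdot> e, y) B \<and> mem2 W' (y, z \<cdot> e) D"
    by (rule composite_eq_join[OF B D]) (rule that)
  have "rel_le C J K" using J K unfolding is_eq_join_def by blast
  then have "mem2 W (x, z) K" using rel_le_mem2 equiv_rel2[OF eq_join_equiv[OF K]] m by blast
  then show ?thesis using elim that by blast
qed


section \<open>Distributivity and majority\<close>

text \<open>The inclusion \<open>A \<and> (B \<circ> D) \<le> (A \<and> B) \<circ> (A \<and> D)\<close> in terms of generalized elements.
  Composites are images, so a middle element \<open>w\<close> exists only after a regular epimorphic cover.\<close>
definition distributive_at where
  "distributive_at X \<longleftrightarrow> (\<forall>A B D W x y z.
     equiv_rel C X A \<and> equiv_rel C X B \<and> equiv_rel C X D \<and>
     mem2 W (x, z) A \<and> mem2 W (x, y) B \<and> mem2 W (y, z) D \<longrightarrow>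
     (\<exists>W' e w. hom C e W' W \<and> regular_epi C e \<and> mem2 W' (x \<cdot> e, w) A \<and> mem2 W' (x \<cdot> e, w) B \<and>
        mem2 W' (w, z \<cdot> e) A \<and> mem2 W' (w, z \<cdot> e) D))"

lemma distributive_atE:
  assumes "distributive_at X" "equiv_rel C X A" "equiv_rel C X B" "equiv_rel C X D"
    "mem2 W (x, z) A" "mem2 W (x, y) B" "mem2 W (y, z) D"
  obtains W' e w where "hom C e W' W" "regular_epi C e" "mem2 W' (x \<cdot> e, w) A" "mem2 W' (x \<cdot> e, w) B"
    "mem2 W' (w, z \<cdot> e) A" "mem2 W' (w, z \<cdot> e) D"
  using assms(1)[unfolded distributive_at_def, rule_format, of A B D W x z y] assms(2-) that by blast

lemma congruence_distributive_distributive_at: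
  assumes CD: "congruence_distributive C" and X: "X \<in> Obj C"
  shows "distributive_at X"
  unfolding distributive_at_def
proof (intro allI impI, elim conjE)
  fix A B D W x y z
  assume A: "equiv_rel C X A" and B: "equiv_rel C X B" and D: "equiv_rel C X D"
    and xz: "mem2 W (x, z) A" and xy: "mem2 W (x, y) B" and yz: "mem2 W (y, z) D"
  obtain J where J: "is_eq_join C X B D J" using eq_join_exists[OF B D] ..
  obtain M where M: "is_eq_meet C X A J M" using eq_meet_exists[OF A eq_join_equiv[OF J]] ..
  obtain M1 where M1: "is_eq_meet C X A B M1" using eq_meet_exists[OF A B] ..
  obtain M2 where M2: "is_eq_meet C X A D M2" using eq_meet_exists[OF A D] ..
  obtain J' where J': "is_eq_join C X M1 M2 J'"
    using eq_join_exists[OF eq_meet_equiv[OF M1] eq_meet_equiv[OF M2]] ..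
  have le: "rel_le C M J'" using CD X A B D J M M1 M2 J' unfolding congruence_distributive_def by blast
  have "mem2 W (x, z) J"
    using equiv_mem2_trans[OF eq_join_equiv[OF J] eq_join_mem2I1[OF J xy] eq_join_mem2I2[OF J yz]] .
  then have "mem2 W (x, z) M" using eq_meet_mem2_iff[OF M A eq_join_equiv[OF J]] xz by blast
  then have "mem2 W (x, z) J'" using rel_le_mem2[OF le equiv_rel2[OF eq_join_equiv[OF J']]] by blast
  then obtain W' e w where "hom C e W' W" "regular_epi C e"
    "mem2 W' (x \<cdot> e, w) M1" "mem2 W' (w, z \<cdot> e) M2"
    using eq_join_mem2E[OF J' eq_meet_equiv[OF M1] eq_meet_equiv[OF M2]] by blast
  then show "\<exists>W' e w. hom C e W' W \<and> regular_epi C e \<and> mem2 W' (x \<cdot> e, w) A \<and> mem2 W' (x \<cdot> e, w) B \<and>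
        mem2 W' (w, z \<cdot> e) A \<and> mem2 W' (w, z \<cdot> e) D"
    using eq_meet_mem2_iff[OF M1 A B] eq_meet_mem2_iff[OF M2 A D] by blast
qed

lemma distributive_at_congruence_distributive:
  assumes dist: "\<And>X. X \<in> Obj C \<Longrightarrow> distributive_at X"
  shows "congruence_distributive C"
  unfolding congruence_distributive_def
proof (intro ballI conjI allI impI; (elim conjE)?)
  fix X A B assume "equiv_rel C X A" "equiv_rel C X B"
  then show "\<exists>M. is_eq_meet C X A B M" "\<exists>J. is_eq_join C X A B J"
    by (rule eq_meet_exists, rule eq_join_exists)
next
  fix X A B D J M M1 M2 J'
  assume A: "equiv_rel C X A" and B: "equiv_rel C X B" and D: "equiv_rel C X D"
    and J: "is_eq_join C X B D J" and M: "is_eq_meet C X A J M"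
    and M1: "is_eq_meet C X A B M1" and M2: "is_eq_meet C X A D M2" and J': "is_eq_join C X M1 M2 J'"
  obtain m1 m2 where Mm: "M = (m1, m2)" by fastforce
  note JE = eq_join_equiv[OF J] and J'R = equiv_rel2[OF eq_join_equiv[OF J']]
  have MR: "rel2 C (m1, m2) X X" using equiv_rel2[OF eq_meet_equiv[OF M]] Mm by simp
  note m = rel2_homs[OF MR]
  txt \<open>It suffices to check the generic element \<open>(m1, m2)\<close> of \<open>M\<close>.\<close>
  have "mem2 (Dom C m1) (m1, m2) A" "mem2 (Dom C m1) (m1, m2) J"
    using eq_meet_mem2_iff[OF M A JE] mem2_generic[OF MR] Mm by simp_all
  moreover obtain W e y where e: "hom C e W (Dom C m1)" "regular_epi C e"
    and xy: "mem2 W (m1 \<cdot> e, y) B" and yz: "mem2 W (y, m2 \<cdot> e) D"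
    using eq_join_mem2E[OF J B D] calculation(2) by blast
  ultimately have "mem2 W (m1 \<cdot> e, m2 \<cdot> e) A" using mem2_precomp[OF equiv_rel2[OF A]] by blast
  then obtain W' e' w where e': "hom C e' W' W" "regular_epi C e'"
    and "mem2 W' ((m1 \<cdot> e) \<cdot> e', w) A" "mem2 W' ((m1 \<cdot> e) \<cdot> e', w) B"
      "mem2 W' (w, (m2 \<cdot> e) \<cdot> e') A" "mem2 W' (w, (m2 \<cdot> e) \<cdot> e') D"
    by (rule distributive_atE[OF dist[OF equiv_obj[OF A]] A B D _ xy yz])
  then have "mem2 W' ((m1 \<cdot> e) \<cdot> e', w) J'" "mem2 W' (w, (m2 \<cdot> e) \<cdot> e') J'"
    using eq_join_mem2I1[OF J'] eq_join_mem2I2[OF J'] eq_meet_mem2_iff[OF M1 A B]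
      eq_meet_mem2_iff[OF M2 A D] by blast+
  then have "mem2 W' ((m1 \<cdot> e) \<cdot> e', (m2 \<cdot> e) \<cdot> e') J'"
    by (rule equiv_mem2_trans[OF eq_join_equiv[OF J']])
  then have "mem2 W (m1 \<cdot> e, m2 \<cdot> e) J'"
    using mem2_descend[OF J'R e'(2,1)] comp_hom[OF e(1)] m by blast
  then have "mem2 (Dom C m1) (m1, m2) J'" using mem2_descend[OF J'R e(2,1)] m by blast
  then show "rel_le C M J'" unfolding Mm rel_le_iff .
qed

lemma majority_distributive_at:
  assumes maj: "is_majority C" and X: "X \<in> Obj C"
  shows "distributive_at X"
  unfolding distributive_at_def
proof (intro allI impI, elim conjE)
  fix A B D W x y z
  assume A: "equiv_rel C X A" and B: "equiv_rel C X B" and D: "equiv_rel C X D"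
    and xz: "mem2 W (x, z) A" and xy: "mem2 W (x, y) B" and yz: "mem2 W (y, z) D"
  obtain T where T: "rel3 C T X X X"
    and intro: "\<And>W p q r w. mem2 W (p, w) B \<Longrightarrow> mem2 W (q, w) A \<Longrightarrow> mem2 W (w, r) D
       \<Longrightarrow> mem3 C W (p, q, r) T"
    and elim: "\<And>W p q r. mem3 C W (p, q, r) T \<Longrightarrow> \<exists>W' e w. hom C e W' W \<and> regular_epi C e \<and>
       mem2 W' (p \<cdot> e, w) B \<and> mem2 W' (q \<cdot> e, w) A \<and> mem2 W' (w, r \<cdot> e) D"
    by (rule ternary_rel[OF equiv_rel2[OF A] equiv_rel2[OF B] equiv_rel2[OF D]]) (rule that)
  have hx: "hom C x W X" and hz: "hom C z W X" using mem2_homs[OF equiv_rel2[OF A] xz] by auto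
  have hy: "hom C y W X" using mem2_homs[OF equiv_rel2[OF B] xy] by auto
  have "mem3 C W (x, x, x) T"
    using intro[OF equiv_mem2_refl[OF B hx] equiv_mem2_refl[OF A hx] equiv_mem2_refl[OF D hx]] .
  moreover have "mem3 C W (x, y, z) T"
    using intro[OF xy equiv_mem2_refl[OF A hy] yz] .
  moreover have "mem3 C W (z, x, z) T"
    using intro[OF equiv_mem2_refl[OF B hz] xz equiv_mem2_refl[OF D hz]] .
  moreover have "majority_selecting C T X X X" using maj X T unfolding is_majority_def by blast
  ultimately have "mem3 C W (x, x, z) T"
    using hom_objs[OF hx] hx hy hz unfolding majority_selecting_def by blast
  then obtain W' e w where e: "hom C e W' W" "regular_epi C e"
    and "mem2 W' (x \<cdot> e, w) B" and xwA: "mem2 W' (x \<cdot> e, w) A" and "mem2 W' (w, z \<cdot> e) D"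
    using elim by blast
  moreover have "mem2 W' (w, z \<cdot> e) A"
    using equiv_mem2_trans[OF A equiv_mem2_sym[OF A xwA] mem2_precomp[OF equiv_rel2[OF A] xz e(1)]] .
  ultimately show "\<exists>W' e w. hom C e W' W \<and> regular_epi C e \<and> mem2 W' (x \<cdot> e, w) A \<and>
      mem2 W' (x \<cdot> e, w) B \<and> mem2 W' (w, z \<cdot> e) A \<and> mem2 W' (w, z \<cdot> e) D"
    by blast
qed

lemma distributive_at_majority_selecting:
  assumes dist: "\<And>X. X \<in> Obj C \<Longrightarrow> distributive_at X" and R: "rel3 C (r1, r2, r3) X Y Z"
  shows "majority_selecting C (r1, r2, r3) X Y Z"
  unfolding majority_selecting_def
proof (intro allI impI, elim conjE)
  fix S x x' y y' z z'
  assume x: "hom C x S X" and y: "hom C y S Y" and z: "hom C z S Z"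
    and m1: "mem3 C S (x, y, z') (r1, r2, r3)" and m2: "mem3 C S (x, y', z) (r1, r2, r3)"
    and m3: "mem3 C S (x', y, z) (r1, r2, r3)"
  define R0 where "R0 = Dom C r1"
  have r: "hom C r1 R0 X" "hom C r2 R0 Y" "hom C r3 R0 Z" using R unfolding rel3_iff R0_def by auto
  obtain K1 where K1: "equiv_rel C R0 K1"
    and ker1: "\<And>W a b. mem2 W (a, b) K1 \<longleftrightarrow> hom C a W R0 \<and> hom C b W R0 \<and> r1 \<cdot> a = r1 \<cdot> b"
    by (rule kernel_pair_equiv[OF r(1)]) (rule that)
  obtain K2 where K2: "equiv_rel C R0 K2"
    and ker2: "\<And>W a b. mem2 W (a, b) K2 \<longleftrightarrow> hom C a W R0 \<and> hom C b W R0 \<and> r2 \<cdot> a = r2 \<cdot> b"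
    by (rule kernel_pair_equiv[OF r(2)]) (rule that)
  obtain K3 where K3: "equiv_rel C R0 K3"
    and ker3: "\<And>W a b. mem2 W (a, b) K3 \<longleftrightarrow> hom C a W R0 \<and> hom C b W R0 \<and> r3 \<cdot> a = r3 \<cdot> b"
    by (rule kernel_pair_equiv[OF r(3)]) (rule that)
  obtain a b c where a: "hom C a S R0" "r1 \<cdot> a = x" "r2 \<cdot> a = y"
    and b: "hom C b S R0" "r1 \<cdot> b = x" "r3 \<cdot> b = z"
    and c: "hom C c S R0" "r2 \<cdot> c = y" "r3 \<cdot> c = z"
    using m1 m2 m3 unfolding mem3_iff R0_def by metis
  have "mem2 S (a, b) K1" "mem2 S (a, c) K2" "mem2 S (c, b) K3"
    using a b c ker1 ker2 ker3 by simp_all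
  then obtain S' e s where e: "hom C e S' S" "regular_epi C e"
    and "mem2 S' (a \<cdot> e, s) K1" "mem2 S' (a \<cdot> e, s) K2" "mem2 S' (s, b \<cdot> e) K3"
    by (rule distributive_atE[OF dist[OF equiv_obj[OF K1]] K1 K2 K3])
  then have s: "hom C s S' R0" and "r1 \<cdot> (a \<cdot> e) = r1 \<cdot> s" "r2 \<cdot> (a \<cdot> e) = r2 \<cdot> s"
    "r3 \<cdot> s = r3 \<cdot> (b \<cdot> e)"
    using ker1 ker2 ker3 by blast+
  then have "r1 \<cdot> s = x \<cdot> e" "r2 \<cdot> s = y \<cdot> e" "r3 \<cdot> s = z \<cdot> e"
    using comp_assoc[OF e(1) a(1) r(1)] comp_assoc[OF e(1) a(1) r(2)] comp_assoc[OF e(1) b(1) r(3)]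
      a(2,3) b(3) by simp_all
  then have "mem3 C S' (x \<cdot> e, y \<cdot> e, z \<cdot> e) (r1, r2, r3)" unfolding mem3_iff using s R0_def by blast
  then show "mem3 C S (x, y, z) (r1, r2, r3)" using mem3_descend[OF R e(2,1) x y z] by blast
qed

end

theorem corollary3p6:
  fixes C :: "('o, 'm) category"
  assumes "is_category C" and "is_regular C" and "is_maltsev C"
  shows "congruence_distributive C \<longleftrightarrow> is_majority C"
proof -
  interpret regular_maltsev_cat C using assms by unfold_locales
  have "is_majority C" if "\<And>X. X \<in> Obj C \<Longrightarrow> distributive_at X"
    unfolding is_majority_def using distributive_at_majority_selecting[OF that] by fastforce
  then show ?thesis
    using congruence_distributive_distributive_at majority_distributive_at
      distributive_at_congruence_distributive by blast
qed

end
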